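(* Let $p(x_1,\dots,x_n)=t_1+\dots+t_r$ be a polynomial in normalized form as described in the context. Then for every $1\le j\le r$ the language $L(t_j)$ is accepted by some real-time (two-way) cellular automaton, i.e., $L(t_j)\in\mathscr{L}_{rt}(\mathrm{CA})$.
   Context: Normalized polynomial: $p(x_1,\dots,x_n)=t_1+\dots+t_r$ with integer coefficients, each term $t_j=s_jx_1^{i_{j,1}}\cdots x_n^{i_{j,n}}$ with $s_j\in\{+1,-1\}$ and exponents $i_{j,m}\ge 0$; there is $1\le p_0\le r$ with $s_1=\dots=s_{p_0}=1$, $s_{p_0+1}=\dots=s_r=-1$, and constant terms appear only at the end, each equal to $-1$. For a positive term $t_j$ ($j\le p_0$): $L(t_j)=\{b_1^{\alpha_1}\cdots b_n^{\alpha_n}c_1^{\alpha_1^{i_{j,1}}}\cdots c_n^{\alpha_n^{i_{j,n}}}d_1^{2^n\alpha_1^{i_{j,1}}\cdots\alpha_n^{i_{j,n}}}\text{¢}\mid \alpha_1,\dots,\alpha_n\ge0\}$. For a negative non-constant term, $L(t_j)$ is defined identically but with $d_2$ in place of $d_1$. For a negative constant term, $L(t_j)=\{d_2^{2^n}\text{¢}\}$. Here $b_m,c_m,d_1,d_2,\text{¢}$ are distinct symbols. A real-time CA is a synchronous linear array of identical finite automata (cells $1,\dots,|w|$ initialized with the input letters, each cell updating from its own state and information sent by both neighbors, outer cells receiving a boundary symbol once at the first step) that accepts $w$ iff the leftmost cell enters an accepting state within $|w|$ steps; $\mathscr{L}_{rt}(\mathrm{CA})$ is the family of languages so accepted. 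*)

theory Defs
  imports Main
begin

text \<open>Symbols b_m, c_m (m = 1..n), d_1, d_2 and the cent sign.\<close>
datatype sym = B nat | C nat | D1 | D2 | Cent

definition blocks :: "nat \<Rightarrow> (nat \<Rightarrow> sym) \<Rightarrow> (nat \<Rightarrow> nat) \<Rightarrow> sym list" where
  "blocks n x f = concat (map (\<lambda>m. replicate (f m) (x m)) [1..<Suc n])"

definition term_word :: "nat \<Rightarrow> (nat \<Rightarrow> nat) \<Rightarrow> sym \<Rightarrow> (nat \<Rightarrow> nat) \<Rightarrow> sym list" where
  "term_word n e d \<alpha> =
     blocks n B \<alpha> @ blocks n C (\<lambda>m. \<alpha> m ^ e m)
     @ replicate (2 ^ n * (\<Prod>m\<in>{1..n}. \<alpha> m ^ e m)) d @ [Cent]"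

definition mono_lang :: "nat \<Rightarrow> (nat \<Rightarrow> nat) \<Rightarrow> sym \<Rightarrow> sym list set" where
  "mono_lang n e d = {term_word n e d \<alpha> | \<alpha>. True}"

text \<open>Term j of a polynomial with signs s and exponent matrix ex (ex j m = i_{j,m}).\<close>
definition is_const_term :: "nat \<Rightarrow> (nat \<Rightarrow> nat \<Rightarrow> nat) \<Rightarrow> nat \<Rightarrow> bool" where
  "is_const_term n ex j \<longleftrightarrow> (\<forall>m\<in>{1..n}. ex j m = 0)"

definition L_term :: "nat \<Rightarrow> (nat \<Rightarrow> int) \<Rightarrow> (nat \<Rightarrow> nat \<Rightarrow> nat) \<Rightarrow> nat \<Rightarrow> sym list set" where
  "L_term n s ex j =
     (if s j = 1 then mono_lang n (ex j) D1
      else if is_const_term n ex j then {replicate (2 ^ n) D2 @ [Cent]}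
      else mono_lang n (ex j) D2)"

definition normalized :: "nat \<Rightarrow> nat \<Rightarrow> nat \<Rightarrow> (nat \<Rightarrow> int) \<Rightarrow> (nat \<Rightarrow> nat \<Rightarrow> nat) \<Rightarrow> bool" where
  "normalized n r p0 s ex \<longleftrightarrow>
     1 \<le> p0 \<and> p0 \<le> r \<and>
     (\<forall>j\<in>{1..p0}. s j = 1) \<and> (\<forall>j\<in>{p0<..r}. s j = -1) \<and>
     (\<forall>j\<in>{1..r}. is_const_term n ex j \<longrightarrow>
        s j = -1 \<and> (\<forall>k\<in>{j..r}. is_const_term n ex k))"

text \<open>What a cell receives from a neighbour: the boundary symbol (outer cells, first
  step only), nothing (outer cells, later steps), or the neighbour's state.\<close>
datatype 'q nbr = Boundary | Silent | St 'q

record ('a) ca =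
  states :: "nat set"
  init :: "'a \<Rightarrow> nat"
  delta :: "nat nbr \<Rightarrow> nat \<Rightarrow> nat nbr \<Rightarrow> nat"
  accepting :: "nat set"

definition wf_ca :: "'a ca \<Rightarrow> bool" where
  "wf_ca M \<longleftrightarrow> finite (states M) \<and> accepting M \<subseteq> states M \<and>
     (\<forall>a. init M a \<in> states M) \<and>
     (\<forall>l q r. q \<in> states M \<longrightarrow> (\<forall>p. l = St p \<longrightarrow> p \<in> states M) \<longrightarrow>
        (\<forall>p. r = St p \<longrightarrow> p \<in> states M) \<longrightarrow> delta M l q r \<in> states M)"

text \<open>Configuration after t steps on input w; cells are numbered 1..length w.\<close>
fun cfg :: "'a ca \<Rightarrow> 'a list \<Rightarrow> nat \<Rightarrow> nat \<Rightarrow> nat" where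
  "cfg M w 0 i = init M (w ! (i - 1))"
| "cfg M w (Suc t) i =
     delta M
       (if i = 1 then (if t = 0 then Boundary else Silent) else St (cfg M w t (i - 1)))
       (cfg M w t i)
       (if i = length w then (if t = 0 then Boundary else Silent) else St (cfg M w t (i + 1)))"

definition ca_accepts :: "'a ca \<Rightarrow> 'a list \<Rightarrow> bool" where
  "ca_accepts M w \<longleftrightarrow> w \<noteq> [] \<and> (\<exists>t\<le>length w. cfg M w t 1 \<in> accepting M)"

definition rt_lang :: "'a ca \<Rightarrow> 'a list set" where
  "rt_lang M = {w. ca_accepts M w}"

definition L_rt_CA :: "'a list set set" where
  "L_rt_CA = {L. \<exists>M. wf_ca M \<and> rt_lang M = L}"

end

theory Submission
  imports Defs "HOL-Library.Countable_Set"
begin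

(* A constant negative term gives the singleton language
   d_2^(2^n) cent, and every other term gives the language
     b_1^a_1 ... b_n^a_n c_1^(a_1^i_1) ... c_n^(a_n^i_n) d^(2^n a_1^i_1 ... a_n^i_n) cent.
   Both are shown to be real-time CA languages via an intermediate machine model:
   a one-way online machine with finite control and finitely many counters that
   reads one letter per step, changes every counter by at most one per step and may
   test counters for zero.  Such a counter machine is simulated in real time by a
   CA: the input shifts left by one cell per step so the leftmost cell sees it
   online, and every counter is stored as a pile of tokens (at most three per cell)
   that spreads to the right; since a counter never exceeds the number of letters
   read, the pile always fits into the array.  The monomial language is then
   recognised by a counter machine that checks the block shape with its finite
   control, stores each a_m in counters while reading the b's, and uses a
   mixed-radix counter (an odometer whose digits have radices a_m, resp. 2) to
   verify each c- and d-block length as a product of radices. *)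

section \<open>Cellular automata over arbitrary finite state sets\<close>

fun gen_cfg :: "('q nbr \<Rightarrow> 'q \<Rightarrow> 'q nbr \<Rightarrow> 'q) \<Rightarrow> ('a \<Rightarrow> 'q) \<Rightarrow> 'a list \<Rightarrow> nat \<Rightarrow> nat \<Rightarrow> 'q" where
  "gen_cfg d ini w 0 i = ini (w ! (i - 1))"
| "gen_cfg d ini w (Suc t) i =
     d (if i = 1 then (if t = 0 then Boundary else Silent) else St (gen_cfg d ini w t (i - 1)))
       (gen_cfg d ini w t i)
       (if i = length w then (if t = 0 then Boundary else Silent) else St (gen_cfg d ini w t (i + 1)))"

definition closed_states :: "'q set \<Rightarrow> ('q nbr \<Rightarrow> 'q \<Rightarrow> 'q nbr \<Rightarrow> 'q) \<Rightarrow> bool" where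
  "closed_states Q d \<longleftrightarrow> (\<forall>l q r. q \<in> Q \<longrightarrow> (\<forall>p. l = St p \<longrightarrow> p \<in> Q) \<longrightarrow>
        (\<forall>p. r = St p \<longrightarrow> p \<in> Q) \<longrightarrow> d l q r \<in> Q)"

lemma gen_cfg_closed:
  assumes "closed_states Q d" "\<And>a. ini a \<in> Q"
  shows "gen_cfg d ini w t i \<in> Q"
  using assms by (induction t arbitrary: i) (auto simp: closed_states_def)

text \<open>Any CA with a finite closed state set, of any type, accepts a language of
  \<open>L_rt_CA\<close>: encode the states injectively as natural numbers.\<close>
lemma finite_ca_in_L_rt:
  assumes fin: "finite Q" and cl: "closed_states Q d" and ini: "\<And>a. ini a \<in> Q"
  shows "{w. w \<noteq> [] \<and> (\<exists>t\<le>length w. acc (gen_cfg d ini w t 1))} \<in> L_rt_CA"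
proof -
  have cQ: "countable Q" using fin by (rule countable_finite)
  define enc where "enc = to_nat_on Q"
  define dec where "dec = from_nat_into Q"
  have dec_enc: "\<And>x. x \<in> Q \<Longrightarrow> dec (enc x) = x" using cQ unfolding enc_def dec_def by simp
  have inj: "inj_on enc Q" using cQ unfolding enc_def by auto
  define M where "M = \<lparr>states = enc ` Q, init = (\<lambda>a. enc (ini a)),
     delta = (\<lambda>l q r. enc (d (map_nbr dec l) (dec q) (map_nbr dec r))),
     accepting = enc ` (Q \<inter> {q. acc q})\<rparr>"
  have "d (map_nbr dec l) (dec (enc q)) (map_nbr dec r) \<in> Q"
    if "q \<in> Q" "\<forall>p. l = St p \<longrightarrow> p \<in> enc ` Q" "\<forall>p. r = St p \<longrightarrow> p \<in> enc ` Q" for l q r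
    using cl[unfolded closed_states_def, rule_format, of "dec (enc q)" "map_nbr dec l" "map_nbr dec r"]
      that dec_enc by (cases l; cases r) auto
  then have wf: "wf_ca M"
    unfolding wf_ca_def M_def using fin ini by auto
  have run: "cfg M w t i = enc (gen_cfg d ini w t i)" for w t i
  proof (induction t arbitrary: i)
    case 0 then show ?case by (simp add: M_def)
  next
    case (Suc t)
    have "\<And>j. dec (enc (gen_cfg d ini w t j)) = gen_cfg d ini w t j"
      by (rule dec_enc, rule gen_cfg_closed[OF cl ini])
    moreover have "delta M = (\<lambda>l q r. enc (d (map_nbr dec l) (dec q) (map_nbr dec r)))"
      by (simp add: M_def)
    ultimately show ?case by (simp add: Suc)
  qed
  have "cfg M w t 1 \<in> accepting M \<longleftrightarrow> acc (gen_cfg d ini w t 1)" for w t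
  proof -
    have "accepting M = enc ` (Q \<inter> {q. acc q})" by (simp add: M_def)
    then show ?thesis unfolding run
      using gen_cfg_closed[OF cl ini, where w=w and t=t and i=1]
      by (simp add: inj_on_image_mem_iff[OF inj])
  qed
  then have "rt_lang M = {w. w \<noteq> [] \<and> (\<exists>t\<le>length w. acc (gen_cfg d ini w t 1))}"
    unfolding rt_lang_def ca_accepts_def by auto
  then show ?thesis using wf unfolding L_rt_CA_def by blast
qed

section \<open>Token piles\<close>

text \<open>A counter of value \<open>v\<close> is stored as \<open>v\<close> tokens distributed over the cells
  \<open>1..N\<close>, at most three per cell and without gaps.  In each step a cell holding
  three tokens pushes one to its right neighbour, and a cell holding one token
  pulls one back from a non-empty right neighbour; \<open>flow a r\<close> is the net number of
  tokens a cell with \<open>a\<close> tokens sends to its right neighbour (state \<open>r\<close>, or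
  \<open>None\<close> at the right border).\<close>
definition flow :: "nat \<Rightarrow> nat option \<Rightarrow> int" where
  "flow a r = (case r of None \<Rightarrow> 0 | Some b \<Rightarrow> if a = 3 then 1 else if a = 1 \<and> 1 \<le> b then -1 else 0)"

definition pile_shape :: "nat \<Rightarrow> (nat \<Rightarrow> nat) \<Rightarrow> bool" where
  "pile_shape N c \<longleftrightarrow> (\<forall>i. 1 \<le> i \<longrightarrow> i \<le> N \<longrightarrow> c i \<le> 3) \<and> (\<forall>i. 1 \<le> i \<longrightarrow> i < N \<longrightarrow> c i = 0 \<longrightarrow> c (Suc i) = 0)"

lemma flow_update_bounds:
  assumes "a \<le> 3" "(r = None \<and> a = 0) \<or> (\<exists>b. r = Some b \<and> b \<le> 3 \<and> (a = 0 \<longrightarrow> b = 0))"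
    "g \<in> {-1,0,1}" "g = -1 \<longrightarrow> 1 \<le> a"
  shows "0 \<le> int a - flow a r + g \<and> int a - flow a r + g \<le> 3 \<and>
     (int a - flow a r + g = 0 \<longrightarrow> a \<le> 1 \<and> (\<forall>b. r = Some b \<longrightarrow> b = 0))"
  using assms unfolding flow_def by (auto split: option.splits)

lemma flow_range: "flow z (Some a) \<in> {-1,0,1}" "flow z (Some a) = -1 \<longrightarrow> 1 \<le> a"
  unfolding flow_def by auto

lemma flow_trivial: "a \<le> 1 \<Longrightarrow> flow a (Some 0) = 0" "flow 0 r = 0" "flow a None = 0"
  unfolding flow_def by (auto split: option.splits)

text \<open>The leftmost cell alone decides whether the counter is zero; this is what
  makes zero tests possible in real time.\<close>
lemma pile_empty_from_first:
  assumes "pile_shape N c" "c 1 = 0"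
  shows "\<forall>i. 1 \<le> i \<longrightarrow> i \<le> N \<longrightarrow> c i = 0"
proof (intro allI impI)
  fix i assume "1 \<le> i" "i \<le> N"
  then show "c i = 0"
  proof (induction i)
    case 0 then show ?case by simp
  next
    case (Suc j) then show ?case using assms unfolding pile_shape_def
      by (cases j) auto
  qed
qed

lemma pile_first_empty_iff:
  assumes "pile_shape N c" "1 \<le> N"
  shows "c 1 = 0 \<longleftrightarrow> (\<Sum>i\<in>{1..N}. c i) = 0"
  using pile_empty_from_first[OF assms(1)] assms(2) by auto

text \<open>A pile with fewer than \<open>N\<close> tokens leaves the last cell empty, so no token
  is ever pushed across the right border.\<close>
lemma pile_last_empty:
  assumes "pile_shape N c" "1 \<le> N" "(\<Sum>i\<in>{1..N}. c i) < N"
  shows "c N = 0"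
proof (rule ccontr)
  assume "c N \<noteq> 0"
  have "c i \<noteq> 0" if i: "1 \<le> i" "i \<le> N" for i
  proof
    assume z: "c i = 0"
    have "i + k \<le> N \<longrightarrow> c (i + k) = 0" for k
      by (induction k) (use z i assms(1) in \<open>auto simp: pile_shape_def\<close>)
    from this[of "N - i"] have "c N = 0" using i by simp
    with \<open>c N \<noteq> 0\<close> show False ..
  qed
  then have "(\<Sum>i\<in>{1..N}. (1::nat)) \<le> (\<Sum>i\<in>{1..N}. c i)"
    by (intro sum_mono) (simp add: Suc_le_eq)
  then show False using assms(3) by simp
qed

lemma transfer_sum:
  fixes c :: "nat \<Rightarrow> nat" and F :: "nat \<Rightarrow> int"
  assumes N: "1 \<le> N" and last: "F N = 0"
  shows "(\<Sum>i\<in>{1..N}. int (c i) - F i + (if i = 1 then d else F (i - 1))) = int (\<Sum>i\<in>{1..N}. c i) + d"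
proof -
  obtain M where M: "N = Suc M" using N by (cases N) auto
  have out: "(\<Sum>i\<in>{1..N}. F i) = (\<Sum>i\<in>{1..M}. F i)"
    using M last by simp
  have "(\<Sum>i\<in>{1..N}. (if i = 1 then d else F (i - 1))) =
      d + (\<Sum>i\<in>{Suc 1..Suc M}. (if i = 1 then d else F (i - 1)))"
    using M by (subst sum.atLeast_Suc_atMost) auto
  also have "(\<Sum>i\<in>{Suc 1..Suc M}. (if i = 1 then d else F (i - 1))) = (\<Sum>i\<in>{1..M}. F i)"
    by (subst sum.shift_bounds_cl_Suc_ivl) (rule sum.cong, auto)
  finally have into: "(\<Sum>i\<in>{1..N}. (if i = 1 then d else F (i - 1))) = d + (\<Sum>i\<in>{1..M}. F i)" .
  show ?thesis
    unfolding sum.distrib sum_subtractf out into by simp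
qed

definition pile_next :: "nat \<Rightarrow> (nat \<Rightarrow> nat) \<Rightarrow> int \<Rightarrow> nat \<Rightarrow> nat" where
  "pile_next N c d i = nat (min 3 (int (c i) - flow (c i) (if i = N then None else Some (c (Suc i)))
     + (if i = 1 then d else flow (c (i - 1)) (Some (c i)))))"

text \<open>One step of a pile with fewer than \<open>N\<close> tokens, with \<open>d \<in> {-1, 0, 1}\<close>
  (never \<open>-1\<close> on an empty counter), preserves the shape and changes the counter
  by exactly \<open>d\<close>; in particular the cap at three tokens never truncates.\<close>
lemma pile_step:
  fixes c :: "nat \<Rightarrow> nat" and N :: nat and d :: int
  assumes J: "pile_shape N c" and N: "1 \<le> N" and S: "(\<Sum>i\<in>{1..N}. c i) < N"
    and d: "d \<in> {-1,0,1}" "d = -1 \<longrightarrow> c 1 \<noteq> 0"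
  shows "pile_shape N (pile_next N c d)"
    and "int (\<Sum>i\<in>{1..N}. pile_next N c d i) = int (\<Sum>i\<in>{1..N}. c i) + d"
proof -
  define F where "F = (\<lambda>i. flow (c i) (if i = N then None else Some (c (Suc i))))"
  define c' where "c' = (\<lambda>i. int (c i) - F i + (if i = 1 then d else F (i - 1)))"
  have cN: "c N = 0" using pile_last_empty[OF J N S] .
  have cell: "0 \<le> c' i \<and> c' i \<le> 3 \<and> (c' i = 0 \<longrightarrow> c i \<le> 1 \<and> (i < N \<longrightarrow> c (Suc i) = 0))"
    if i: "1 \<le> i" "i \<le> N" for i
  proof -
    let ?r = "if i = N then None else Some (c (Suc i))"
    let ?g = "if i = 1 then d else F (i - 1)"
    have a: "c i \<le> 3" using J i by (auto simp: pile_shape_def)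
    have r: "(?r = None \<and> c i = 0) \<or> (\<exists>b. ?r = Some b \<and> b \<le> 3 \<and> (c i = 0 \<longrightarrow> b = 0))"
      using J i cN by (auto simp: pile_shape_def)
    have g: "?g \<in> {-1,0,1} \<and> (?g = -1 \<longrightarrow> 1 \<le> c i)"
    proof (cases "i = 1")
      case True then show ?thesis using d by auto
    next
      case False
      then have "?g = flow (c (i - 1)) (Some (c i))" using i by (simp add: F_def cN flow_trivial)
      then show ?thesis using flow_range by auto
    qed
    have "c' i = int (c i) - flow (c i) ?r + ?g" by (simp add: c'_def F_def)
    then show ?thesis using flow_update_bounds[OF a r, of ?g] g by auto
  qed
  have next_eq: "pile_next N c d i = nat (c' i)" if i: "1 \<le> i" "i \<le> N" for i
  proof -
    have "i \<noteq> 1 \<Longrightarrow> i - 1 \<noteq> N" using i by arith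
    then have "i \<noteq> 1 \<Longrightarrow> F (i - 1) = flow (c (i - 1)) (Some (c i))" using i by (simp add: F_def)
    then have "pile_next N c d i = nat (min 3 (c' i))"
      by (simp add: pile_next_def c'_def F_def)
    then show ?thesis using cell[OF i] by simp
  qed
  show "pile_shape N (pile_next N c d)"
    unfolding pile_shape_def
  proof (intro conjI allI impI)
    fix i assume "1 \<le> i" "i \<le> N" then show "pile_next N c d i \<le> 3" using cell next_eq by fastforce
  next
    fix i assume i: "1 \<le> i" "i < N" "pile_next N c d i = 0"
    then have ci: "c i \<le> 1" "c (Suc i) = 0" using cell[of i] next_eq[of i] by auto
    have "c' (Suc i) = int (c (Suc i)) - F (Suc i) + F i" using i by (simp add: c'_def)
    also have "\<dots> = 0" using ci i by (simp add: F_def flow_trivial)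
    finally show "pile_next N c d (Suc i) = 0" using next_eq[of "Suc i"] i by simp
  qed
  have "int (\<Sum>i\<in>{1..N}. pile_next N c d i) = (\<Sum>i\<in>{1..N}. c' i)"
    unfolding of_nat_sum using cell next_eq by (intro sum.cong) auto
  also have "\<dots> = int (\<Sum>i\<in>{1..N}. c i) + d"
    unfolding c'_def using transfer_sum[OF N, of F c d] by (simp add: F_def flow_trivial)
  finally show "int (\<Sum>i\<in>{1..N}. pile_next N c d i) = int (\<Sum>i\<in>{1..N}. c i) + d" .
qed

lemma pile_tracks_counter:
  assumes shape: "pile_shape N P" and N: "1 \<le> N" and size: "(\<Sum>i\<in>{1..N}. P i) = v"
    and bound: "v \<le> t" "t < N"
    and g: "g \<in> {-1,0,1}" "g = -1 \<longrightarrow> P 1 \<noteq> 0"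
    and new: "\<forall>i\<in>{1..N}. P' i = pile_next N P g i"
    and counter: "int v' = int v + g"
  shows "pile_shape N P' \<and> (\<Sum>i\<in>{1..N}. P' i) = v' \<and> v' \<le> Suc t"
proof (intro conjI)
  have "(\<Sum>i\<in>{1..N}. P i) < N" using size bound by simp
  note step = pile_step[OF shape N this g]
  show "pile_shape N P'" using step(1) new unfolding pile_shape_def by auto
  have "(\<Sum>i\<in>{1..N}. P' i) = (\<Sum>i\<in>{1..N}. pile_next N P g i)"
    using new by (intro sum.cong) auto
  then have "int (\<Sum>i\<in>{1..N}. P' i) = int v + g"
    using step(2) size by (simp del: of_nat_sum)
  then show "(\<Sum>i\<in>{1..N}. P' i) = v'" using counter by linarith
  show "v' \<le> Suc t" using counter bound g(1) by auto
qed

section \<open>Online counter machines and their real-time simulation\<close>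

text \<open>A counter machine with control states \<open>'c\<close>, input letters \<open>'b\<close> and counters
  indexed by \<open>K\<close>: in state \<open>q\<close>, reading \<open>b\<close>, and knowing which counters are zero,
  \<open>ms\<close> yields the next state and a requested change per counter, which is clamped
  to \<open>{-1, 0, 1}\<close>.\<close>
definition clamp :: "int \<Rightarrow> int" where "clamp x = max (-1) (min 1 x)"

definition cm_step :: "'k set \<Rightarrow> ('c \<Rightarrow> 'b \<Rightarrow> ('k \<Rightarrow> bool) \<Rightarrow> 'c \<times> ('k \<Rightarrow> int)) \<Rightarrow>
    'c \<times> ('k \<Rightarrow> nat) \<Rightarrow> 'b \<Rightarrow> 'c \<times> ('k \<Rightarrow> nat)" where
  "cm_step K ms cv b = (let q = fst cv; v = snd cv; res = ms q b (\<lambda>k. v k = 0) in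
     (fst res, \<lambda>k. if k \<in> K then nat (int (v k) + clamp (snd res k)) else 0))"

definition cm_run :: "'k set \<Rightarrow> ('c \<Rightarrow> 'b \<Rightarrow> ('k \<Rightarrow> bool) \<Rightarrow> 'c \<times> ('k \<Rightarrow> int)) \<Rightarrow>
    'c \<Rightarrow> 'b list \<Rightarrow> 'c \<times> ('k \<Rightarrow> nat)" where
  "cm_run K ms q0 bs = foldl (cm_step K ms) (q0, \<lambda>k. 0) bs"

lemma clamp_range: "clamp x \<in> {-1,0,1}" "x < 0 \<Longrightarrow> clamp x = -1" "clamp x = -1 \<Longrightarrow> x < 0"
  unfolding clamp_def by auto

lemma cm_step_pair: "cm_step K ms (f, v) a = (fst (ms f a (\<lambda>k. v k = 0)), \<lambda>k. if k \<in> K then nat (int (v k) + clamp (snd (ms f a (\<lambda>k. v k = 0)) k)) else 0)"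
  by (simp add: cm_step_def Let_def)

lemma cm_run_control: "(\<And>q a z. fst (ms q a z) = g q a) \<Longrightarrow> fst (foldl (cm_step K ms) (q, v) u) = foldl g q u"
proof (induction u arbitrary: q v)
  case Nil then show ?case by simp
next
  case (Cons a u) then show ?case by (simp add: cm_step_def Let_def)
qed

text \<open>A cell state is (input letter still to be shifted left,
  control state, pile heights of all counters).  The leftmost cell runs the finite
  control on the letter it currently holds and feeds the counter changes into the
  piles; every other cell only moves tokens.\<close>
type_synonym ('b, 'c, 'k) cm_cell = "'b option \<times> 'c \<times> ('k \<Rightarrow> nat)"

definition nbr_pile :: "('b, 'c, 'k) cm_cell nbr \<Rightarrow> 'k \<Rightarrow> nat option" where
  "nbr_pile r k = (case r of St u \<Rightarrow> Some (snd (snd u) k) | _ \<Rightarrow> None)"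

definition nbr_input :: "('b, 'c, 'k) cm_cell nbr \<Rightarrow> 'b option" where
  "nbr_input r = (case r of St u \<Rightarrow> fst u | _ \<Rightarrow> None)"

definition head_update ::
    "('c \<Rightarrow> 'b \<Rightarrow> ('k \<Rightarrow> bool) \<Rightarrow> 'c \<times> ('k \<Rightarrow> int)) \<Rightarrow> 'c \<Rightarrow> 'b option \<Rightarrow> ('k \<Rightarrow> nat) \<Rightarrow> 'c \<times> ('k \<Rightarrow> int)" where
  "head_update ms q x p = (case x of None \<Rightarrow> (q, \<lambda>k. 0)
      | Some b \<Rightarrow> (fst (ms q b (\<lambda>k. p k = 0)),
                   \<lambda>k. if snd (ms q b (\<lambda>k. p k = 0)) k < 0 \<and> p k = 0 then 0
                        else clamp (snd (ms q b (\<lambda>k. p k = 0)) k)))"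

definition cm_delta :: "'k set \<Rightarrow> ('c \<Rightarrow> 'b \<Rightarrow> ('k \<Rightarrow> bool) \<Rightarrow> 'c \<times> ('k \<Rightarrow> int)) \<Rightarrow>
   ('b, 'c, 'k) cm_cell nbr \<Rightarrow> ('b, 'c, 'k) cm_cell \<Rightarrow> ('b, 'c, 'k) cm_cell nbr \<Rightarrow> ('b, 'c, 'k) cm_cell" where
  "cm_delta K ms l s r = (let x = fst s; q = fst (snd s); p = snd (snd s);
     qg = (case l of St u \<Rightarrow> (q, \<lambda>k. flow (snd (snd u) k) (Some (p k))) | _ \<Rightarrow> head_update ms q x p)
   in (nbr_input r, fst qg, \<lambda>k. if k \<in> K then nat (min 3 (int (p k) - flow (p k) (nbr_pile r k) + snd qg k)) else 0))"

text \<open>Since a counter grows by at most one per letter, it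
  stays below the array length, which is what \<open>pile_step\<close> needs.\<close>
lemma cm_simulation:
  fixes w :: "'a list" and norm :: "'a \<Rightarrow> 'b" and qz :: 'c and K :: "'k set"
    and ms :: "'c \<Rightarrow> 'b \<Rightarrow> ('k \<Rightarrow> bool) \<Rightarrow> 'c \<times> ('k \<Rightarrow> int)"
  defines "ini \<equiv> \<lambda>a. (Some (norm a), qz, \<lambda>k. 0)"
  defines "S \<equiv> \<lambda>t i. gen_cfg (cm_delta K ms) ini w t i"
  defines "R \<equiv> \<lambda>t. cm_run K ms qz (take t (map norm w))"
  assumes N: "1 \<le> length w"
  shows "t \<le> length w \<Longrightarrow>
     (\<forall>i. 1 \<le> i \<longrightarrow> i \<le> length w \<longrightarrow> fst (S t i) = (if i + t \<le> length w then Some (norm (w ! (i + t - 1))) else None))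
   \<and> fst (snd (S t 1)) = fst (R t)
   \<and> (\<forall>k\<in>K. pile_shape (length w) (\<lambda>i. snd (snd (S t i)) k) \<and> (\<Sum>i\<in>{1..length w}. snd (snd (S t i)) k) = snd (R t) k
          \<and> snd (R t) k \<le> t)
   \<and> (\<forall>k. k \<notin> K \<longrightarrow> (\<forall>i. snd (snd (S t i)) k = 0) \<and> snd (R t) k = 0)"
proof (induction t)
  case 0
  show ?case by (auto simp: S_def R_def ini_def cm_run_def pile_shape_def)
next
  case (Suc t)
  let ?N = "length w"
  from Suc have tN: "t < ?N" by simp
  from Suc.IH tN have IH_input: "\<And>i. 1 \<le> i \<Longrightarrow> i \<le> ?N \<Longrightarrow> fst (S t i) = (if i + t \<le> ?N then Some (norm (w ! (i + t - 1))) else None)"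
    and IH_control: "fst (snd (S t 1)) = fst (R t)"
    and IH_pile: "\<And>k. k \<in> K \<Longrightarrow> pile_shape ?N (\<lambda>i. snd (snd (S t i)) k) \<and> (\<Sum>i\<in>{1..?N}. snd (snd (S t i)) k) = snd (R t) k \<and> snd (R t) k \<le> t"
    and IH_unused: "\<And>k. k \<notin> K \<Longrightarrow> (\<forall>i. snd (snd (S t i)) k = 0) \<and> snd (R t) k = 0"
    by auto
  define P where "P = (\<lambda>i. snd (snd (S t i)))"
  define q where "q = fst (snd (S t 1))"
  define b where "b = norm (w ! t)"
  have head_input: "fst (S t 1) = Some b" using IH_input[of 1] tN N by (simp add: b_def)
  have R_Suc: "R (Suc t) = cm_step K ms (R t) b"
    unfolding R_def cm_run_def b_def using tN by (simp add: take_Suc_conv_app_nth)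
  have zero_tests: "(\<lambda>k. P 1 k = 0) = (\<lambda>k. snd (R t) k = 0)"
  proof
    fix k show "(P 1 k = 0) = (snd (R t) k = 0)"
    proof (cases "k \<in> K")
      case True
      then show ?thesis using IH_pile[OF True] pile_first_empty_iff[of ?N "\<lambda>i. P i k"] N by (auto simp: P_def)
    next
      case False then show ?thesis using IH_unused[OF False] by (simp add: P_def)
    qed
  qed
  define res where "res = ms q b (\<lambda>k. P 1 k = 0)"
  define g where "g = (\<lambda>k. if snd res k < 0 \<and> P 1 k = 0 then 0 else clamp (snd res k))"
  have S_Suc: "S (Suc t) i = cm_delta K ms (if i = 1 then (if t = 0 then Boundary else Silent) else St (S t (i - 1)))
       (S t i) (if i = ?N then (if t = 0 then Boundary else Silent) else St (S t (i + 1)))" for i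
    by (simp add: S_def)
  have head: "head_update ms q (fst (S t 1)) (P 1) = (fst res, g)"
    unfolding head_update_def head_input res_def g_def by simp
  have pile: "snd (snd (S (Suc t) i)) k = (if k \<in> K then pile_next ?N (\<lambda>i. P i k) (g k) i else 0)"
    if "1 \<le> i" "i \<le> ?N" for i k
    using that head by (cases "i = 1") (auto simp: S_Suc cm_delta_def Let_def nbr_pile_def P_def q_def pile_next_def)
  have R_next: "fst (R (Suc t)) = fst res"
    "snd (R (Suc t)) k = (if k \<in> K then nat (int (snd (R t) k) + clamp (snd res k)) else 0)" for k
    unfolding R_Suc cm_step_def res_def q_def IH_control zero_tests by (simp_all add: Let_def)
  show ?case
  proof (intro conjI ballI allI impI)
    fix i assume i: "1 \<le> i" "i \<le> ?N"
    show "fst (S (Suc t) i) = (if i + Suc t \<le> ?N then Some (norm (w ! (i + Suc t - 1))) else None)"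
    proof (cases "i = ?N")
      case True then show ?thesis by (auto simp: S_Suc cm_delta_def Let_def nbr_input_def)
    next
      case False
      then have "fst (S (Suc t) i) = fst (S t (Suc i))" by (auto simp: S_Suc cm_delta_def Let_def nbr_input_def)
      also have "\<dots> = (if Suc i + t \<le> ?N then Some (norm (w ! (Suc i + t - 1))) else None)"
        using IH_input[of "Suc i"] i False by auto
      finally show ?thesis by simp
    qed
  next
    show "fst (snd (S (Suc t) 1)) = fst (R (Suc t))"
      using head R_next by (auto simp: S_Suc cm_delta_def Let_def P_def q_def)
  next
    fix k assume kK: "k \<in> K"
    from IH_pile[OF kK] have shape: "pile_shape ?N (\<lambda>i. P i k)" and size: "(\<Sum>i\<in>{1..?N}. P i k) = snd (R t) k"
      and bound: "snd (R t) k \<le> t" by (auto simp: P_def)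
    have g: "g k \<in> {-1,0,1}" "g k = -1 \<longrightarrow> P 1 k \<noteq> 0" using clamp_range[of "snd res k"] by (auto simp: g_def)
    have new: "\<forall>i\<in>{1..?N}. snd (snd (S (Suc t) i)) k = pile_next ?N (\<lambda>i. P i k) (g k) i"
      using pile kK by auto
    have "P 1 k = 0 \<longleftrightarrow> snd (R t) k = 0" using zero_tests by metis
    then have "int (snd (R (Suc t)) k) = int (snd (R t) k) + g k"
      using R_next(2)[of k] kK clamp_range[of "snd res k"] by (auto simp: g_def)
    from pile_tracks_counter[OF shape N size bound tN g new this]
    show "pile_shape ?N (\<lambda>i. snd (snd (S (Suc t) i)) k)"
      and "(\<Sum>i\<in>{1..?N}. snd (snd (S (Suc t) i)) k) = snd (R (Suc t)) k"
      and "snd (R (Suc t)) k \<le> Suc t" by auto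
  next
    fix k i assume "k \<notin> K"
    then show "snd (snd (S (Suc t) i)) k = 0" by (auto simp: S_Suc cm_delta_def Let_def)
  next
    fix k assume "k \<notin> K"
    then show "snd (R (Suc t)) k = 0" using R_next(2) by simp
  qed
qed

lemma cm_delta_closed:
  assumes cl: "\<And>q b z. q \<in> Cs \<Longrightarrow> b \<in> A \<Longrightarrow> fst (ms q b z) \<in> Cs"
  shows "closed_states (insert None (Some ` A) \<times> Cs \<times>
     {f. \<forall>k. (k \<in> K \<longrightarrow> f k \<in> {0..3}) \<and> (k \<notin> K \<longrightarrow> f k = 0)}) (cm_delta K ms)"
    (is "closed_states ?Q _")
  unfolding closed_states_def
proof (intro allI impI)
  fix l s r assume sQ: "s \<in> ?Q" and lQ: "\<forall>p. l = St p \<longrightarrow> p \<in> ?Q" and rQ: "\<forall>p. r = St p \<longrightarrow> p \<in> ?Q"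
  obtain x q p where s: "s = (x, q, p)" by (cases s) auto
  have x: "x = None \<or> x \<in> Some ` A" and q: "q \<in> Cs" using sQ s by auto
  have "nbr_input r \<in> insert None (Some ` A)" using rQ by (cases r) (auto simp: nbr_input_def)
  moreover have "fst (case l of St u \<Rightarrow> (q, \<lambda>k. flow (snd (snd u) k) (Some (p k))) | _ \<Rightarrow> head_update ms q x p) \<in> Cs"
    using x q cl by (cases l) (auto simp: head_update_def split: option.splits)
  ultimately show "cm_delta K ms l s r \<in> ?Q"
    unfolding cm_delta_def s Let_def fst_conv snd_conv by auto
qed

theorem counter_machine_in_L_rt:
  fixes norm :: "'a \<Rightarrow> 'b" and q0 :: 'c and K :: "'k set"
    and ms :: "'c \<Rightarrow> 'b \<Rightarrow> ('k \<Rightarrow> bool) \<Rightarrow> 'c \<times> ('k \<Rightarrow> int)"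
  assumes fK: "finite K" and fC: "finite Cs" and fA: "finite A" and nA: "\<And>a. norm a \<in> A"
    and q0: "q0 \<in> Cs" and cl: "\<And>q b z. q \<in> Cs \<Longrightarrow> b \<in> A \<Longrightarrow> fst (ms q b z) \<in> Cs"
  shows "{w. w \<noteq> [] \<and> fst (cm_run K ms q0 (map norm w)) \<in> F} \<in> L_rt_CA"
proof -
  define Q where "Q = insert None (Some ` A) \<times> Cs \<times>
     {f. \<forall>k. (k \<in> K \<longrightarrow> f k \<in> {0..3::nat}) \<and> (k \<notin> K \<longrightarrow> f k = 0)}"
  define ini where "ini = (\<lambda>a. (Some (norm a), q0, \<lambda>k::'k. 0::nat))"
  define acc where "acc = (\<lambda>s::('b, 'c, 'k) cm_cell. fst s = None \<and> fst (snd s) \<in> F)"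
  have fQ: "finite Q" unfolding Q_def
    using fA fC finite_set_of_finite_funs[OF fK, of "{0..3::nat}" 0] by auto
  have iQ: "\<And>a. ini a \<in> Q" unfolding ini_def Q_def using nA q0 by auto
  have cQ: "closed_states Q (cm_delta K ms)" unfolding Q_def by (rule cm_delta_closed[OF cl])
  have "(\<exists>t\<le>length w. acc (gen_cfg (cm_delta K ms) ini w t 1)) \<longleftrightarrow> fst (cm_run K ms q0 (map norm w)) \<in> F"
    if "w \<noteq> []" for w
  proof -
    from that have N: "1 \<le> length w" by (cases w) auto
    note sim = cm_simulation[where w=w and norm=norm and qz=q0 and K=K and ms=ms, OF N, folded ini_def]
    text \<open>The leftmost cell has consumed the whole input exactly at time \<open>|w|\<close>.\<close>
    have "acc (gen_cfg (cm_delta K ms) ini w t 1) \<longleftrightarrow> t = length w \<and> fst (cm_run K ms q0 (map norm w)) \<in> F"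
      if "t \<le> length w" for t
      using sim[OF that] that N by (auto simp: acc_def)
    then show ?thesis by auto
  qed
  then have "{w. w \<noteq> [] \<and> (\<exists>t\<le>length w. acc (gen_cfg (cm_delta K ms) ini w t 1))} =
        {w. w \<noteq> [] \<and> fst (cm_run K ms q0 (map norm w)) \<in> F}" by auto
  with finite_ca_in_L_rt[where acc=acc and ini=ini, OF fQ cQ iQ] show ?thesis by simp
qed

section \<open>The odometer: a mixed-radix counter made of counters\<close>

text \<open>Digit \<open>j < L\<close> has radix \<open>r j\<close> and is kept as a count-down value \<open>x j\<close>
  together with its complement \<open>y j = r j - 1 - x j\<close>.  A step decrements the
  lowest non-zero digit and resets all lower digits; a reset only swaps the roles
  of \<open>x j\<close> and \<open>y j\<close> (recorded in the switch bit \<open>sw j\<close>), so on counters it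
  costs no more than a unit change.  When all digits are zero the odometer
  overflows.  It thus reaches the all-zero state exactly after
  \<open>r 0 * ... * r (L - 1) - 1\<close> steps.\<close>
type_synonym odo = "(nat \<Rightarrow> bool) \<times> (nat \<Rightarrow> nat) \<times> (nat \<Rightarrow> nat) \<times> bool"

definition has_nonzero :: "nat \<Rightarrow> (nat \<Rightarrow> nat) \<Rightarrow> bool" where "has_nonzero L x \<longleftrightarrow> (\<exists>j<L. x j \<noteq> 0)"
definition first_nonzero :: "nat \<Rightarrow> (nat \<Rightarrow> nat) \<Rightarrow> nat" where "first_nonzero L x = (LEAST j. j < L \<and> x j \<noteq> 0)"

definition odo_step :: "nat \<Rightarrow> odo \<Rightarrow> odo" where
  "odo_step L st = (let sw = fst st; x = fst (snd st); y = fst (snd (snd st)); ov = snd (snd (snd st)) in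
     if has_nonzero L x then
       (\<lambda>j. if j < first_nonzero L x then \<not> sw j else sw j,
        \<lambda>j. if j < first_nonzero L x then y j else if j = first_nonzero L x then x j - 1 else x j,
        \<lambda>j. if j < first_nonzero L x then x j else if j = first_nonzero L x then y j + 1 else y j, ov)
     else (sw, x, y, True))"

definition odo_init :: "(nat \<Rightarrow> nat) \<Rightarrow> odo" where "odo_init r = (\<lambda>_. False, \<lambda>j. r j - 1, \<lambda>_. 0, False)"

definition radix_prod :: "(nat \<Rightarrow> nat) \<Rightarrow> nat \<Rightarrow> nat" where "radix_prod r j = (\<Prod>i\<in>{0..<j}. r i)"

text \<open>Number of steps represented by the digits.\<close>
definition odo_value :: "nat \<Rightarrow> (nat \<Rightarrow> nat) \<Rightarrow> (nat \<Rightarrow> nat) \<Rightarrow> nat" where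
  "odo_value L r x = (\<Sum>j\<in>{0..<L}. (r j - 1 - x j) * radix_prod r j)"

definition odo_inv :: "nat \<Rightarrow> (nat \<Rightarrow> nat) \<Rightarrow> odo \<Rightarrow> bool" where
  "odo_inv L r st \<longleftrightarrow> (\<forall>j<L. fst (snd st) j + fst (snd (snd st)) j = r j - 1)"

lemma radix_prod_pos: "\<forall>j<J. 1 \<le> r j \<Longrightarrow> 1 \<le> radix_prod r J"
  unfolding radix_prod_def by (induction J) auto

lemma radix_prod_Suc: "radix_prod r (Suc j) = radix_prod r j * r j" unfolding radix_prod_def by simp

lemma radix_prod_telescope: "\<forall>j<J. 1 \<le> r j \<Longrightarrow> (\<Sum>j\<in>{0..<J}. (r j - 1) * radix_prod r j) = radix_prod r J - 1"
proof (induction J)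
  case 0 then show ?case by (simp add: radix_prod_def)
next
  case (Suc J)
  have p: "1 \<le> radix_prod r J" using radix_prod_pos Suc.prems by auto
  have rJ: "1 \<le> r J" using Suc.prems by auto
  have "(\<Sum>j\<in>{0..<Suc J}. (r j - 1) * radix_prod r j) = radix_prod r J - 1 + (r J - 1) * radix_prod r J" using Suc by simp
  also have "\<dots> = radix_prod r J * r J - 1"
  proof -
    obtain P R where "radix_prod r J = Suc P" "r J = Suc R" using p rJ by (metis Suc_le_D One_nat_def)
    then show ?thesis by (simp add: algebra_simps)
  qed
  finally show ?case by (simp add: radix_prod_Suc)
qed

lemma first_nonzero_props: assumes "has_nonzero L x"
  shows "first_nonzero L x < L" "x (first_nonzero L x) \<noteq> 0" "\<And>j. j < first_nonzero L x \<Longrightarrow> x j = 0"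
proof -
  obtain j where j: "j < L" "x j \<noteq> 0" using assms has_nonzero_def by auto
  show "first_nonzero L x < L" "x (first_nonzero L x) \<noteq> 0" unfolding first_nonzero_def using LeastI[of "\<lambda>j. j < L \<and> x j \<noteq> 0" j] j by auto
  fix i assume "i < first_nonzero L x"
  moreover have "first_nonzero L x < L" unfolding first_nonzero_def using LeastI[of "\<lambda>j. j < L \<and> x j \<noteq> 0" j] j by auto
  ultimately show "x i = 0" unfolding first_nonzero_def using not_less_Least[of i "\<lambda>j. j < L \<and> x j \<noteq> 0"]
    by auto
qed

lemma odo_inv_step: assumes "odo_inv L r st" shows "odo_inv L r (odo_step L st)"
proof -
  obtain sw x y ov where st: "st = (sw, x, y, ov)" by (cases st) auto
  have xr: "\<And>j. j < L \<Longrightarrow> x j + y j = r j - 1" using assms st by (auto simp: odo_inv_def)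
  show ?thesis
  proof (cases "has_nonzero L x")
    case False then show ?thesis using assms st by (simp add: odo_step_def odo_inv_def)
  next
    case True
    note jp = first_nonzero_props[OF True]
    have h: "x (first_nonzero L x) + y (first_nonzero L x) = r (first_nonzero L x) - 1" "x (first_nonzero L x) \<noteq> 0" using xr[OF jp(1)] jp(2) by auto
    show ?thesis unfolding st odo_inv_def
    proof (intro allI impI)
      fix j assume j: "j < L"
      consider "j < first_nonzero L x" | "j = first_nonzero L x" | "first_nonzero L x < j" by arith
      then show "fst (snd (odo_step L (sw, x, y, ov))) j + fst (snd (snd (odo_step L (sw, x, y, ov)))) j = r j - 1"
      proof cases
        case 1 then show ?thesis using xr[OF j] True by (simp add: odo_step_def add.commute)
      next
        case 2 then show ?thesis using h True by (simp add: odo_step_def)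
      next
        case 3 then show ?thesis using xr[OF j] True by (simp add: odo_step_def)
      qed
    qed
  qed
qed

lemma odo_value_step:
  assumes inv: "odo_inv L r (sw, x, y, ov)" and r: "\<forall>j<L. 1 \<le> r j" and h: "has_nonzero L x"
  shows "odo_value L r (fst (snd (odo_step L (sw, x, y, ov)))) = odo_value L r x + 1"
proof -
  define J where "J = first_nonzero L x"
  note jp = first_nonzero_props[OF h, folded J_def]
  define x' where "x' = (\<lambda>j. if j < J then y j else if j = J then x j - 1 else x j)"
  have xs: "fst (snd (odo_step L (sw, x, y, ov))) = x'" unfolding odo_step_def x'_def J_def using h by simp
  have xr: "\<And>j. j < L \<Longrightarrow> x j + y j = r j - 1" using inv by (auto simp: odo_inv_def)
  let ?T = "\<lambda>x j. (r j - 1 - x j) * radix_prod r j"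
  have split: "\<And>x. odo_value L r x = (\<Sum>j\<in>{0..<J}. ?T x j) + ?T x J + (\<Sum>j\<in>{Suc J..<L}. ?T x j)"
  proof -
    fix x :: "nat \<Rightarrow> nat"
    have "odo_value L r x = (\<Sum>j\<in>{0..<J}. ?T x j) + (\<Sum>j\<in>{J..<L}. ?T x j)"
      unfolding odo_value_def using jp(1) by (subst sum.atLeastLessThan_concat) auto
    also have "(\<Sum>j\<in>{J..<L}. ?T x j) = ?T x J + (\<Sum>j\<in>{Suc J..<L}. ?T x j)"
      using jp(1) by (subst sum.atLeast_Suc_lessThan) auto
    finally show "odo_value L r x = (\<Sum>j\<in>{0..<J}. ?T x j) + ?T x J + (\<Sum>j\<in>{Suc J..<L}. ?T x j)" by simp
  qed
  have a1: "(\<Sum>j\<in>{0..<J}. ?T x' j) = 0"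
  proof (intro sum.neutral ballI)
    fix j assume "j \<in> {0..<J}"
    then have "j < J" "j < L" using jp(1) by auto
    then have "y j = r j - 1" using xr[of j] jp(3)[of j] by auto
    then show "?T x' j = 0" using \<open>j < J\<close> by (simp add: x'_def)
  qed
  have a2: "(\<Sum>j\<in>{0..<J}. ?T x j) = radix_prod r J - 1"
  proof -
    have "(\<Sum>j\<in>{0..<J}. ?T x j) = (\<Sum>j\<in>{0..<J}. (r j - 1) * radix_prod r j)"
      using jp(3) by (intro sum.cong) auto
    also have "\<dots> = radix_prod r J - 1" using radix_prod_telescope[of J r] r jp(1) by auto
    finally show ?thesis .
  qed
  have a3: "(\<Sum>j\<in>{Suc J..<L}. ?T x' j) = (\<Sum>j\<in>{Suc J..<L}. ?T x j)"
    by (intro sum.cong) (auto simp: x'_def)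
  have xJ: "1 \<le> x J" "x J \<le> r J - 1" using jp(2) xr[OF jp(1)] by auto
  have a4: "?T x' J = ?T x J + radix_prod r J"
  proof -
    have "r J - 1 - x' J = (r J - 1 - x J) + 1" using xJ by (simp add: x'_def)
    then show ?thesis by (simp add: algebra_simps)
  qed
  have pp: "1 \<le> radix_prod r J" using radix_prod_pos r jp(1) by auto
  show ?thesis unfolding xs split[of x'] split[of x] a1 a2 a3 a4 using pp by simp
qed

lemma odo_value_complement: assumes "odo_inv L r (sw, x, y, ov)" "\<forall>j<L. 1 \<le> r j"
  shows "odo_value L r x + (\<Sum>j\<in>{0..<L}. x j * radix_prod r j) = radix_prod r L - 1"
proof -
  have "odo_value L r x + (\<Sum>j\<in>{0..<L}. x j * radix_prod r j) = (\<Sum>j\<in>{0..<L}. (r j - 1) * radix_prod r j)"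
    unfolding odo_value_def sum.distrib[symmetric]
  proof (intro sum.cong refl)
    fix j assume "j \<in> {0..<L}"
    then have "x j \<le> r j - 1" using assms(1) by (auto simp: odo_inv_def)
    then show "(r j - 1 - x j) * radix_prod r j + x j * radix_prod r j = (r j - 1) * radix_prod r j" by (metis add_mult_distrib le_add_diff_inverse2)
  qed
  also have "\<dots> = radix_prod r L - 1" using radix_prod_telescope assms(2) by auto
  finally show ?thesis .
qed

lemma odo_value_max_iff: assumes "odo_inv L r (sw, x, y, ov)" "\<forall>j<L. 1 \<le> r j"
  shows "\<not> has_nonzero L x \<longleftrightarrow> odo_value L r x = radix_prod r L - 1"
proof -
  have "(\<Sum>j\<in>{0..<L}. x j * radix_prod r j) = 0 \<longleftrightarrow> (\<forall>j<L. x j = 0)"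
  proof -
    have "\<And>j. j < L \<Longrightarrow> 1 \<le> radix_prod r j" using assms(2) by (intro radix_prod_pos) auto
    note pos = this
    have "(\<Sum>j\<in>{0..<L}. x j * radix_prod r j) = 0 \<longleftrightarrow> (\<forall>j\<in>{0..<L}. x j * radix_prod r j = 0)" by (simp add: sum_eq_0_iff)
    also have "\<dots> \<longleftrightarrow> (\<forall>j<L. x j = 0)"
    proof
      assume H: "\<forall>j\<in>{0..<L}. x j * radix_prod r j = 0"
      show "\<forall>j<L. x j = 0"
      proof (intro allI impI)
        fix j assume "j < L"
        then have "x j * radix_prod r j = 0" "1 \<le> radix_prod r j" using H pos by auto
        then show "x j = 0" by simp
      qed
    qed auto
    finally show ?thesis .
  qed
  moreover have "\<not> has_nonzero L x \<longleftrightarrow> (\<forall>j<L. x j = 0)" by (auto simp: has_nonzero_def)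
  moreover note odo_value_complement[OF assms]
  ultimately show ?thesis by (metis add.right_neutral add_left_imp_eq)
qed

definition odo_iter :: "nat \<Rightarrow> (nat \<Rightarrow> nat) \<Rightarrow> nat \<Rightarrow> odo" where
  "odo_iter L r s = (odo_step L ^^ s) (odo_init r)"

abbreviation "odo_overflow st \<equiv> snd (snd (snd st))"
abbreviation "odo_digits st \<equiv> fst (snd st)"

lemma odo_iter_Suc: "odo_iter L r (Suc s) = odo_step L (odo_iter L r s)" by (simp add: odo_iter_def)

lemma odo_iter_inv: "odo_inv L r (odo_iter L r s)"
proof (induction s)
  case 0 then show ?case by (simp add: odo_iter_def odo_init_def odo_inv_def)
next
  case (Suc s) then show ?case unfolding odo_iter_Suc by (rule odo_inv_step)
qed

lemma odo_overflow_sticky: "odo_overflow st \<Longrightarrow> odo_overflow (odo_step L st)"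
  by (auto simp: odo_step_def Let_def)

lemma odo_iter_below: assumes r: "\<forall>j<L. 1 \<le> r j"
  shows "s < radix_prod r L \<Longrightarrow> \<not> odo_overflow (odo_iter L r s) \<and> odo_value L r (odo_digits (odo_iter L r s)) = s"
proof (induction s)
  case 0 then show ?case by (simp add: odo_iter_def odo_init_def odo_value_def)
next
  case (Suc s)
  obtain sw x y ov where st: "odo_iter L r s = (sw, x, y, ov)" by (cases "odo_iter L r s") auto
  from Suc have IH: "\<not> ov" "odo_value L r x = s" using st by auto
  have inv: "odo_inv L r (sw, x, y, ov)" using odo_iter_inv[of L r s] st by simp
  have h: "has_nonzero L x" using odo_value_max_iff[OF inv r] IH Suc.prems by auto
  have nx: "odo_iter L r (Suc s) = odo_step L (sw, x, y, ov)" using st by (simp add: odo_iter_def)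
  show ?case using odo_value_step[OF inv r h] h IH unfolding nx by (simp add: odo_step_def)
qed

lemma odo_iter_overflow: assumes r: "\<forall>j<L. 1 \<le> r j"
  shows "radix_prod r L \<le> s \<Longrightarrow> odo_overflow (odo_iter L r s)"
proof (induction s)
  case 0 then show ?case using radix_prod_pos[OF r] by simp
next
  case (Suc s)
  show ?case
  proof (cases "radix_prod r L \<le> s")
    case True then show ?thesis using Suc odo_overflow_sticky by (simp add: odo_iter_def)
  next
    case False
    then have s: "s = radix_prod r L - 1" "s < radix_prod r L" using Suc.prems by auto
    obtain sw x y ov where st: "odo_iter L r s = (sw, x, y, ov)" by (cases "odo_iter L r s") auto
    have inv: "odo_inv L r (sw, x, y, ov)" using odo_iter_inv[of L r s] st by simp
    have "odo_value L r x = radix_prod r L - 1" using odo_iter_below[OF r s(2)] st s by simp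
    then have h: "\<not> has_nonzero L x" using odo_value_max_iff[OF inv r] by simp
    have nx: "odo_iter L r (Suc s) = odo_step L (sw, x, y, ov)" using st by (simp add: odo_iter_def)
    show ?thesis unfolding nx using h by (simp add: odo_step_def)
  qed
qed

lemma odo_iter_final_iff: assumes r: "\<forall>j<L. 1 \<le> r j"
  shows "(\<not> odo_overflow (odo_iter L r s) \<and> \<not> has_nonzero L (odo_digits (odo_iter L r s))) \<longleftrightarrow> s = radix_prod r L - 1"
proof (cases "s < radix_prod r L")
  case True
  obtain sw x y ov where st: "odo_iter L r s = (sw, x, y, ov)" by (cases "odo_iter L r s") auto
  have inv: "odo_inv L r (sw, x, y, ov)" using odo_iter_inv[of L r s] st by simp
  show ?thesis using odo_iter_below[OF r True] odo_value_max_iff[OF inv r] st by auto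
next
  case False then show ?thesis using odo_iter_overflow[OF r] radix_prod_pos[OF r] by auto
qed

section \<open>The shape check\<close>

text \<open>The words \<open>b_1^* ... b_n^* c_1^* ... c_n^* d^* cent\<close> form a regular set,
  recognised by remembering the rank of the last letter read: ranks \<open>1..n\<close> for
  \<open>b_m\<close>, \<open>n+1..2n\<close> for \<open>c_m\<close>, \<open>2n+1\<close> for the \<open>d\<close>-symbol and \<open>2n+2\<close>
  for the end marker; ranks must not decrease and nothing may follow the marker.\<close>

definition shape_rank :: "nat \<Rightarrow> sym \<Rightarrow> sym \<Rightarrow> nat option" where
  "shape_rank n d a = (case a of B m \<Rightarrow> if 1 \<le> m \<and> m \<le> n then Some m else None
     | C m \<Rightarrow> if 1 \<le> m \<and> m \<le> n then Some (n + m) else None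
     | Cent \<Rightarrow> Some (2 * n + 2)
     | _ \<Rightarrow> if a = d then Some (2 * n + 1) else None)"

definition shape_letter :: "nat \<Rightarrow> sym \<Rightarrow> nat \<Rightarrow> sym" where
  "shape_letter n d k = (if 1 \<le> k \<and> k \<le> n then B k else if k \<le> 2 * n then C (k - n)
     else if k = 2 * n + 1 then d else Cent)"

definition shape_step :: "nat \<Rightarrow> sym \<Rightarrow> nat option \<Rightarrow> sym \<Rightarrow> nat option" where
  "shape_step n d rs a = (case rs of None \<Rightarrow> None | Some r \<Rightarrow>
     (case shape_rank n d a of None \<Rightarrow> None | Some k \<Rightarrow> if r \<le> k \<and> r < 2 * n + 2 then Some k else None))"

definition shape_blocks :: "nat \<Rightarrow> sym \<Rightarrow> nat \<Rightarrow> nat \<Rightarrow> (nat \<Rightarrow> nat) \<Rightarrow> sym list" where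
  "shape_blocks n d lo hi cnt = concat (map (\<lambda>k. replicate (cnt k) (shape_letter n d k)) [lo..<hi])"

definition shape_word :: "nat \<Rightarrow> sym \<Rightarrow> (nat \<Rightarrow> nat) \<Rightarrow> (nat \<Rightarrow> nat) \<Rightarrow> nat \<Rightarrow> sym list" where
  "shape_word n d \<alpha> \<gamma> \<delta> = blocks n B \<alpha> @ blocks n C \<gamma> @ replicate \<delta> d @ [Cent]"

lemma shape_rank_letter: assumes "d \<in> {D1, D2}" "1 \<le> k" "k \<le> 2 * n + 2"
  shows "shape_rank n d (shape_letter n d k) = Some k"
  using assms by (auto simp: shape_rank_def shape_letter_def)

lemma shape_rank_inv: assumes "d \<in> {D1, D2}" "shape_rank n d a = Some k"
  shows "a = shape_letter n d k \<and> 1 \<le> k \<and> k \<le> 2 * n + 2"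
  using assms by (cases a) (auto simp: shape_rank_def shape_letter_def split: if_splits)

lemma shape_step_None[simp]: "foldl (shape_step n d) None u = None"
  by (induction u) (auto simp: shape_step_def)

lemma shape_step_final: "u \<noteq> [] \<Longrightarrow> foldl (shape_step n d) (Some (2 * n + 2)) u = None"
  by (cases u) (auto simp: shape_step_def split: option.splits)

lemma shape_blocks_empty: "hi \<le> lo \<Longrightarrow> shape_blocks n d lo hi cnt = []" by (simp add: shape_blocks_def)

lemma shape_blocks_Suc: "lo \<le> hi \<Longrightarrow> shape_blocks n d lo (Suc hi) cnt = shape_blocks n d lo hi cnt @ replicate (cnt hi) (shape_letter n d hi)"
  by (simp add: shape_blocks_def)

lemma shape_blocks_Cons: "lo < hi \<Longrightarrow> shape_blocks n d lo hi cnt = replicate (cnt lo) (shape_letter n d lo) @ shape_blocks n d (Suc lo) hi cnt"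
  by (simp add: shape_blocks_def upt_conv_Cons)

lemma shape_blocks_skip: "lo \<le> lo' \<Longrightarrow> lo' \<le> hi \<Longrightarrow> (\<forall>k. lo \<le> k \<and> k < lo' \<longrightarrow> cnt k = 0) \<Longrightarrow>
   shape_blocks n d lo hi cnt = shape_blocks n d lo' hi cnt"
proof (induction "lo' - lo" arbitrary: lo)
  case 0 then show ?case by simp
next
  case (Suc x)
  then have "lo < hi" by auto
  then show ?case using Suc by (subst shape_blocks_Cons) (auto)
qed

lemma shape_run_replicate: assumes "d \<in> {D1, D2}" "1 \<le> k" "k < 2 * n + 2" "r \<le> k"
  shows "foldl (shape_step n d) (Some r) (replicate c (shape_letter n d k)) = Some (if c = 0 then r else k)"
  using assms
proof (induction c arbitrary: r)
  case 0 then show ?case by simp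
next
  case (Suc c)
  have "shape_step n d (Some r) (shape_letter n d k) = Some k"
    using Suc.prems shape_rank_letter[of d k n] by (simp add: shape_step_def)
  then show ?case using Suc.IH[of k] Suc.prems by simp
qed

lemma shape_run_blocks: assumes d: "d \<in> {D1, D2}" and "1 \<le> lo" "lo \<le> hi" "hi \<le> 2 * n + 2" "r \<le> lo"
  shows "\<exists>r'. foldl (shape_step n d) (Some r) (shape_blocks n d lo hi cnt) = Some r' \<and> (r' < hi \<or> r' = r)"
  using assms(2-)
proof (induction hi)
  case 0 then show ?case by auto
next
  case (Suc hi)
  show ?case
  proof (cases "lo = Suc hi")
    case True then show ?thesis using Suc by (simp add: shape_blocks_empty)
  next
    case False
    then have h: "lo \<le> hi" using Suc by auto
    obtain r' where r': "foldl (shape_step n d) (Some r) (shape_blocks n d lo hi cnt) = Some r'" "r' < hi \<or> r' = r"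
      using Suc h by auto
    have "r' \<le> hi" using r' Suc h by auto
    then show ?thesis unfolding shape_blocks_Suc[OF h] using r' shape_run_replicate[OF d, of hi n r' "cnt hi"] Suc h by auto
  qed
qed

lemma shape_blocks_prepend:
  assumes low: "\<forall>j<k. cnt j = 0" and k: "1 \<le> k" "k < hi"
  shows "shape_letter n d k # shape_blocks n d 1 hi cnt = shape_blocks n d 1 hi (cnt(k := Suc (cnt k)))"
proof -
  let ?cnt' = "cnt(k := Suc (cnt k))"
  have "shape_blocks n d 1 hi c = replicate (c k) (shape_letter n d k) @ shape_blocks n d (Suc k) hi c"
    if "\<forall>j<k. c j = 0" for c
  proof -
    have "shape_blocks n d 1 hi c = shape_blocks n d k hi c"
      using that k by (intro shape_blocks_skip) auto
    also have "\<dots> = replicate (c k) (shape_letter n d k) @ shape_blocks n d (Suc k) hi c"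
      using k(2) by (rule shape_blocks_Cons)
    finally show ?thesis .
  qed
  note split = this[of cnt] this[of ?cnt']
  moreover have "shape_blocks n d (Suc k) hi ?cnt' = shape_blocks n d (Suc k) hi cnt"
    by (auto simp: shape_blocks_def intro!: arg_cong[where f=concat] map_cong)
  ultimately show ?thesis using split low by simp
qed

lemma shape_run_sound:
  assumes d: "d \<in> {D1, D2}"
  shows "r < 2 * n + 2 \<Longrightarrow> foldl (shape_step n d) (Some r) u = Some (2 * n + 2) \<Longrightarrow>
     \<exists>cnt. (\<forall>k<r. cnt k = 0) \<and> u = shape_blocks n d 1 (2 * n + 2) cnt @ [Cent]"
proof (induction u arbitrary: r)
  case Nil
  then show ?case by auto
next
  case (Cons a u)
  have run: "foldl (shape_step n d) (shape_step n d (Some r) a) u = Some (2 * n + 2)"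
    using Cons.prems(2) by simp
  then obtain k where k: "shape_step n d (Some r) a = Some k"
    by (cases "shape_step n d (Some r) a") auto
  then have ra: "shape_rank n d a = Some k" and rk: "r \<le> k"
    by (auto simp: shape_step_def split: option.splits if_splits)
  have ru: "foldl (shape_step n d) (Some k) u = Some (2 * n + 2)" using run k by simp
  from shape_rank_inv[OF d ra] have a: "a = shape_letter n d k" "1 \<le> k" "k \<le> 2 * n + 2" by auto
  show ?case
  proof (cases "k = 2 * n + 2")
    case True
    then have "u = []" using ru shape_step_final[of u n d] by (cases u) auto
    then show ?thesis using True a by (intro exI[of _ "\<lambda>_. 0"]) (auto simp: shape_blocks_def shape_letter_def)
  next
    case False
    then have kl: "k < 2 * n + 2" using a by auto
    obtain cnt where c: "\<forall>j<k. cnt j = 0" "u = shape_blocks n d 1 (2 * n + 2) cnt @ [Cent]"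
      using Cons.IH[OF kl ru] by auto
    have "a # u = shape_blocks n d 1 (2 * n + 2) (cnt(k := Suc (cnt k))) @ [Cent]"
      using shape_blocks_prepend[OF c(1) a(2) kl] c(2) a(1) by simp
    moreover have "\<forall>j<r. (cnt(k := Suc (cnt k))) j = 0" using c(1) rk by simp
    ultimately show ?thesis by blast
  qed
qed

lemma shape_run_complete:
  assumes d: "d \<in> {D1, D2}" and r: "r < 2 * n + 2"
    and low: "\<forall>k<r. cnt k = 0"
  shows "foldl (shape_step n d) (Some r) (shape_blocks n d 1 (2 * n + 2) cnt @ [Cent]) = Some (2 * n + 2)"
proof -
  define lo where "lo = max 1 r"
  have "shape_blocks n d 1 (2 * n + 2) cnt = shape_blocks n d lo (2 * n + 2) cnt"
    using low r by (intro shape_blocks_skip) (auto simp: lo_def)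
  moreover obtain r' where r': "foldl (shape_step n d) (Some r) (shape_blocks n d lo (2 * n + 2) cnt) = Some r'"
    "r' < 2 * n + 2 \<or> r' = r"
    using shape_run_blocks[OF d, of lo "2 * n + 2" n r cnt] r by (auto simp: lo_def)
  ultimately show ?thesis using r by (auto simp: shape_step_def shape_rank_def)
qed

lemma shape_blocks_append: "lo \<le> mid \<Longrightarrow> mid \<le> hi \<Longrightarrow> shape_blocks n d lo hi cnt = shape_blocks n d lo mid cnt @ shape_blocks n d mid hi cnt"
proof -
  assume a: "lo \<le> mid" "mid \<le> hi"
  then have "[lo..<hi] = [lo..<mid] @ [mid..<hi]" using upt_add_eq_append[of lo mid "hi - mid"] by simp
  then show ?thesis unfolding shape_blocks_def by simp
qed

lemma map_shift_upt: "map (\<lambda>i. i + n) [a..<b] = [a + n..<b + n]"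
  by (induction b) auto

lemma blocks_cong: "(\<And>m. 1 \<le> m \<Longrightarrow> m \<le> n \<Longrightarrow> f m = g m) \<Longrightarrow> blocks n x f = blocks n x g"
  unfolding blocks_def by (intro arg_cong[where f=concat] map_cong) auto

lemma shape_blocks_word: "shape_blocks n d 1 (2 * n + 2) cnt @ [Cent] = shape_word n d cnt (\<lambda>m. cnt (n + m)) (cnt (2 * n + 1))"
proof -
  have s: "shape_blocks n d 1 (2 * n + 2) cnt = shape_blocks n d 1 (n + 1) cnt @ shape_blocks n d (n + 1) (2 * n + 1) cnt @ shape_blocks n d (2 * n + 1) (2 * n + 2) cnt"
    using shape_blocks_append[of 1 "n+1" "2*n+2" n d cnt] shape_blocks_append[of "n+1" "2*n+1" "2*n+2" n d cnt] by simp
  have b: "shape_blocks n d 1 (n + 1) cnt = blocks n B cnt"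
    unfolding shape_blocks_def blocks_def by (rule arg_cong[where f=concat], rule map_cong) (auto simp: shape_letter_def)
  have "shape_blocks n d (n + 1) (2 * n + 1) cnt = concat (map (\<lambda>k. replicate (cnt k) (shape_letter n d k)) (map (\<lambda>i. i + n) [1..<n+1]))"
    unfolding shape_blocks_def map_shift_upt by (simp add: mult_2)
  also have "\<dots> = blocks n C (\<lambda>m. cnt (n + m))"
    unfolding blocks_def map_map o_def by (rule arg_cong[where f=concat], rule map_cong) (auto simp: shape_letter_def add.commute)
  finally have c: "shape_blocks n d (n + 1) (2 * n + 1) cnt = blocks n C (\<lambda>m. cnt (n + m))" .
  have e: "shape_blocks n d (2 * n + 1) (2 * n + 2) cnt = replicate (cnt (2 * n + 1)) d"
    by (simp add: shape_blocks_def shape_letter_def)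
  show ?thesis unfolding s b c e shape_word_def by simp
qed

lemma shape_check_iff: assumes d: "d \<in> {D1, D2}"
  shows "foldl (shape_step n d) (Some 0) u = Some (2 * n + 2) \<longleftrightarrow> (\<exists>\<alpha> \<gamma> \<delta>. u = shape_word n d \<alpha> \<gamma> \<delta>)"
proof
  assume "foldl (shape_step n d) (Some 0) u = Some (2 * n + 2)"
  then obtain cnt where "u = shape_blocks n d 1 (2 * n + 2) cnt @ [Cent]" using shape_run_sound[OF d, of 0 n u] by auto
  then show "\<exists>\<alpha> \<gamma> \<delta>. u = shape_word n d \<alpha> \<gamma> \<delta>" using shape_blocks_word by metis
next
  assume "\<exists>\<alpha> \<gamma> \<delta>. u = shape_word n d \<alpha> \<gamma> \<delta>"
  then obtain \<alpha> \<gamma> \<delta> where u: "u = shape_word n d \<alpha> \<gamma> \<delta>" by auto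
  define cnt where "cnt = (\<lambda>k. if 1 \<le> k \<and> k \<le> n then \<alpha> k else if n < k \<and> k \<le> 2 * n then \<gamma> (k - n) else if k = 2 * n + 1 then \<delta> else 0)"
  have "u = shape_word n d cnt (\<lambda>m. cnt (n + m)) (cnt (2 * n + 1))"
  proof -
    have "blocks n B \<alpha> = blocks n B cnt" by (rule blocks_cong) (auto simp: cnt_def)
    moreover have "blocks n C \<gamma> = blocks n C (\<lambda>m. cnt (n + m))" by (rule blocks_cong) (auto simp: cnt_def)
    ultimately show ?thesis unfolding u shape_word_def by (simp add: cnt_def)
  qed
  then have "u = shape_blocks n d 1 (2 * n + 2) cnt @ [Cent]" using shape_blocks_word by metis
  then show "foldl (shape_step n d) (Some 0) u = Some (2 * n + 2)" using shape_run_complete[OF d, of 0 n cnt] by simp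
qed

section \<open>The counting check\<close>

text \<open>For the exponent vector \<open>e\<close>, block \<open>h\<close> (\<open>c_h\<close> for \<open>1 \<le> h \<le> n\<close>, the
  \<open>d\<close>-block for \<open>h = 0\<close>) must have length \<open>\<alpha>_h^(e h)\<close>, resp.
  \<open>2^n * \<alpha>_1^(e 1) * ... * \<alpha>_n^(e n)\<close>.  Odometer \<open>h\<close> has one digit per factor
  of this product; \<open>digit_source\<close> names the \<open>b\<close>-block whose length is its radix,
  with source \<open>0\<close> standing for the radix \<open>2\<close>.  The finite control keeps the
  boolean flags below: the input has started (\<open>FInit\<close>), block \<open>b_m\<close> is non-empty
  (\<open>FLd m\<close>), switch bits (\<open>FSw\<close>), odometer started (\<open>FSt\<close>) or overflowed
  (\<open>FOv\<close>), and the final verdict (\<open>FVer\<close>).\<close>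
datatype flag = FInit | FLd nat | FSw nat nat | FSt nat | FOv nat | FVer

definition digit_sources :: "nat \<Rightarrow> (nat \<Rightarrow> nat) \<Rightarrow> nat \<Rightarrow> nat list" where
  "digit_sources n e h = (if h = 0 then concat (map (\<lambda>m. replicate (e m) m) [1..<Suc n]) @ replicate n 0
                else replicate (e h) h)"

abbreviation "num_digits n e h \<equiv> length (digit_sources n e h)"
abbreviation "digit_source n e h j \<equiv> digit_sources n e h ! j"

definition count_target :: "nat \<Rightarrow> sym \<Rightarrow> sym \<Rightarrow> nat option" where
  "count_target n d a = (case a of C m \<Rightarrow> if 1 \<le> m \<and> m \<le> n then Some m else None
     | Cent \<Rightarrow> None | B _ \<Rightarrow> None | _ \<Rightarrow> if a = d then Some 0 else None)"

definition radix_of :: "(nat \<Rightarrow> nat) \<Rightarrow> nat \<Rightarrow> nat" where "radix_of \<beta> s = (if s = 0 then 2 else \<beta> s)"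

text \<open>Counters are indexed by (odometer, digit, copy); the two copies of a
  digit hold the digit and its complement, the switch bit telling which is which.\<close>
type_synonym digit_key = "nat \<times> nat \<times> bool"

definition digit_keys :: "nat \<Rightarrow> (nat \<Rightarrow> nat) \<Rightarrow> digit_key set" where
  "digit_keys n e = {(h, j, b). h \<le> n \<and> j < num_digits n e h}"

text \<open>Reading \<open>b_m\<close> raises
  every digit with source \<open>m\<close> by one (the first \<open>b_m\<close> only sets \<open>FLd m\<close>,
  so the digit ends at \<open>\<alpha>_m - 1\<close>); the first letter sets the radix-two digits
  to one; a letter of block \<open>h\<close> performs one step of odometer \<open>h\<close> (the first
  one only starts it); the end marker evaluates all odometers.\<close>
definition count_machine :: "nat \<Rightarrow> (nat \<Rightarrow> nat) \<Rightarrow> sym \<Rightarrow> (flag \<Rightarrow> bool) \<Rightarrow> sym \<Rightarrow> (digit_key \<Rightarrow> bool) \<Rightarrow> (flag \<Rightarrow> bool) \<times> (digit_key \<Rightarrow> int)" where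
  "count_machine n e d f a z = (let
     zD = (\<lambda>h j. z (h, j, f (FSw h j)));
     hz = (\<lambda>h. \<exists>j < num_digits n e h. \<not> zD h j);
     j0 = (\<lambda>h. LEAST j. j < num_digits n e h \<and> \<not> zD h j);
     stepo = (\<lambda>h. count_target n d a = Some h \<and> f (FSt h));
     zr = (\<lambda>h. \<exists>j<num_digits n e h. digit_source n e h j \<noteq> 0 \<and> \<not> f (FLd (digit_source n e h j)));
     okv = (\<lambda>h. if zr h then \<not> f (FSt h) else f (FSt h) \<and> \<not> f (FOv h) \<and> (\<forall>j<num_digits n e h. zD h j))
   in (\<lambda>k. case k of FInit \<Rightarrow> True
       | FLd m \<Rightarrow> f (FLd m) \<or> (a = B m \<and> 1 \<le> m \<and> m \<le> n)
       | FSw h j \<Rightarrow> (if stepo h \<and> hz h \<and> j < j0 h then \<not> f (FSw h j) else f (FSw h j))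
       | FSt h \<Rightarrow> f (FSt h) \<or> count_target n d a = Some h
       | FOv h \<Rightarrow> f (FOv h) \<or> (stepo h \<and> \<not> hz h)
       | FVer \<Rightarrow> (if a = Cent then (\<forall>h \<le> n. okv h) else f FVer),
     \<lambda>(h, j, b). (if \<not> f FInit \<and> digit_source n e h j = 0 \<and> b = f (FSw h j) then 1 else 0)
       + (if (\<exists>m. a = B m \<and> 1 \<le> m \<and> m \<le> n \<and> f (FLd m) \<and> digit_source n e h j = m) \<and> b = f (FSw h j) then 1 else 0)
       + (if stepo h \<and> hz h \<and> j = j0 h then (if b = f (FSw h j) then -1 else 1) else 0)))"

definition odo_radices :: "nat \<Rightarrow> (nat \<Rightarrow> nat) \<Rightarrow> (nat \<Rightarrow> nat) \<Rightarrow> nat \<Rightarrow> nat \<Rightarrow> nat" where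
  "odo_radices n e \<beta> h j = radix_of \<beta> (digit_source n e h j)"

definition odo_state :: "nat \<Rightarrow> (nat \<Rightarrow> nat) \<Rightarrow> (nat \<Rightarrow> nat) \<Rightarrow> nat \<Rightarrow> nat \<Rightarrow> odo" where
  "odo_state n e \<beta> h s = odo_iter (num_digits n e h) (odo_radices n e \<beta> h) s"

definition initial_digit :: "nat \<Rightarrow> (nat \<Rightarrow> nat) \<Rightarrow> bool \<Rightarrow> (nat \<Rightarrow> nat) \<Rightarrow> nat \<Rightarrow> nat \<Rightarrow> nat" where
  "initial_digit n e \<iota> \<beta> h j = (if digit_source n e h j = 0 then (if \<iota> then 1 else 0) else \<beta> (digit_source n e h j) - 1)"

text \<open>The configuration of the counting machine after the \<open>b\<close>-blocks with lengths
  \<open>\<beta>\<close> and \<open>k h\<close> letters of each block \<open>h\<close> (\<open>\<iota>\<close>: some letter was read):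
  odometer \<open>h\<close> has performed \<open>k h - 1\<close> steps.\<close>
definition count_config :: "nat \<Rightarrow> (nat \<Rightarrow> nat) \<Rightarrow> bool \<Rightarrow> (nat \<Rightarrow> nat) \<Rightarrow> (nat \<Rightarrow> nat) \<Rightarrow> (flag \<Rightarrow> bool) \<times> (digit_key \<Rightarrow> nat)" where
  "count_config n e \<iota> \<beta> k = ((\<lambda>fk. case fk of FInit \<Rightarrow> \<iota>
       | FLd m \<Rightarrow> 1 \<le> m \<and> m \<le> n \<and> 0 < \<beta> m
       | FSw h j \<Rightarrow> h \<le> n \<and> j < num_digits n e h \<and> 0 < k h \<and> fst (odo_state n e \<beta> h (k h - 1)) j
       | FSt h \<Rightarrow> h \<le> n \<and> 0 < k h
       | FOv h \<Rightarrow> h \<le> n \<and> 0 < k h \<and> odo_overflow (odo_state n e \<beta> h (k h - 1))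
       | FVer \<Rightarrow> False),
     \<lambda>(h, j, b). if h \<le> n \<and> j < num_digits n e h then
        (if k h = 0 then (if b then 0 else initial_digit n e \<iota> \<beta> h j)
         else (if b = fst (odo_state n e \<beta> h (k h - 1)) j then odo_digits (odo_state n e \<beta> h (k h - 1)) j
               else fst (snd (snd (odo_state n e \<beta> h (k h - 1)))) j))
        else 0)"

lemma digit_source_range: assumes "h \<le> n" "j < num_digits n e h"
  shows "digit_source n e h j = 0 \<or> (1 \<le> digit_source n e h j \<and> digit_source n e h j \<le> n)"
proof (cases "h = 0")
  case True
  have "digit_source n e h j \<in> set (digit_sources n e h)" using assms(2) by simp
  then show ?thesis using True by (auto simp: digit_sources_def)
next
  case False then show ?thesis using assms by (auto simp: digit_sources_def)
qed

lemma count_step_B: assumes m: "1 \<le> m" "m \<le> n"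
  shows "cm_step (digit_keys n e) (count_machine n e d) (count_config n e \<iota> \<beta> (\<lambda>_. 0)) (B m) = count_config n e True (\<beta>(m := \<beta> m + 1)) (\<lambda>_. 0)"
proof -
  obtain f v where fv: "count_config n e \<iota> \<beta> (\<lambda>_. 0) = (f, v)" by fastforce
  have f: "f = fst (count_config n e \<iota> \<beta> (\<lambda>_. 0))" and v: "v = snd (count_config n e \<iota> \<beta> (\<lambda>_. 0))" using fv by auto
  have no_target: "count_target n d (B m) = None" by (simp add: count_target_def)
  have F: "fst (count_machine n e d f (B m) z) = fst (count_config n e True (\<beta>(m := \<beta> m + 1)) (\<lambda>_. 0))" for z
    unfolding count_machine_def Let_def no_target f count_config_def
    using m by (auto split: flag.splits)
  have V: "(\<lambda>k. if k \<in> digit_keys n e then nat (int (v k) + clamp (snd (count_machine n e d f (B m) z) k)) else 0)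
       = snd (count_config n e True (\<beta>(m := \<beta> m + 1)) (\<lambda>_. 0))" for z
  proof
    fix k :: digit_key
    obtain h j b where k: "k = (h, j, b)" by (cases k) auto
    show "(if k \<in> digit_keys n e then nat (int (v k) + clamp (snd (count_machine n e d f (B m) z) k)) else 0)
       = snd (count_config n e True (\<beta>(m := \<beta> m + 1)) (\<lambda>_. 0)) k"
    proof (cases "h \<le> n \<and> j < num_digits n e h")
      case False then show ?thesis by (auto simp: k digit_keys_def count_config_def)
    next
      case True
      note sr = digit_source_range[of h n j e] True
      show ?thesis using True sr m
        unfolding k digit_keys_def v f count_config_def count_machine_def Let_def no_target
        by (auto simp: clamp_def initial_digit_def)
    qed
  qed
  show ?thesis unfolding fv cm_step_pair F V by simp
qed

lemma count_machine_snd: "snd (count_machine n e d f a z) (h, j, b) =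
   (if \<not> f FInit \<and> digit_source n e h j = 0 \<and> b = f (FSw h j) then 1 else 0)
   + (if (\<exists>m. a = B m \<and> 1 \<le> m \<and> m \<le> n \<and> f (FLd m) \<and> digit_source n e h j = m) \<and> b = f (FSw h j) then 1 else 0)
   + (if count_target n d a = Some h \<and> f (FSt h) \<and> (\<exists>j<num_digits n e h. \<not> z (h, j, f (FSw h j)))
         \<and> j = (LEAST j. j < num_digits n e h \<and> \<not> z (h, j, f (FSw h j))) then (if b = f (FSw h j) then -1 else 1) else 0)"
  by (simp add: count_machine_def Let_def)

lemma count_machine_fst: "fst (count_machine n e d f a z) = (\<lambda>k. case k of FInit \<Rightarrow> True
       | FLd m \<Rightarrow> f (FLd m) \<or> (a = B m \<and> 1 \<le> m \<and> m \<le> n)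
       | FSw h j \<Rightarrow> (if (count_target n d a = Some h \<and> f (FSt h)) \<and> (\<exists>j<num_digits n e h. \<not> z (h, j, f (FSw h j)))
             \<and> j < (LEAST j. j < num_digits n e h \<and> \<not> z (h, j, f (FSw h j))) then \<not> f (FSw h j) else f (FSw h j))
       | FSt h \<Rightarrow> f (FSt h) \<or> count_target n d a = Some h
       | FOv h \<Rightarrow> f (FOv h) \<or> ((count_target n d a = Some h \<and> f (FSt h)) \<and> \<not> (\<exists>j<num_digits n e h. \<not> z (h, j, f (FSw h j))))
       | FVer \<Rightarrow> (if a = Cent then (\<forall>h \<le> n. (if (\<exists>j<num_digits n e h. digit_source n e h j \<noteq> 0 \<and> \<not> f (FLd (digit_source n e h j)))
            then \<not> f (FSt h) else f (FSt h) \<and> \<not> f (FOv h) \<and> (\<forall>j<num_digits n e h. z (h, j, f (FSw h j))))) else f FVer))"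
  by (simp add: count_machine_def Let_def)

lemma count_target_not_B: "count_target n d a = Some h \<Longrightarrow> a \<noteq> Cent \<and> (\<forall>m. a \<noteq> B m) \<and> h \<le> n"
  by (cases a) (auto simp: count_target_def split: if_splits)

text \<open>The value of a started odometer as seen by the counter machine: the switch
  flags select which of the two counters of a digit holds the digit, so the zero
  tests on the selected counters read off the current digits.\<close>
lemma count_config_started:
  assumes f_def: "f = fst (count_config n e \<iota> \<beta> k)"
    and z_def: "z = (\<lambda>kk. snd (count_config n e \<iota> \<beta> k) kk = 0)"
    and h: "h \<le> n" and started: "0 < k h"
    and st: "odo_state n e \<beta> h (k h - 1) = (sw, x, y, ov)"
  shows "\<And>j. j < num_digits n e h \<Longrightarrow> f (FSw h j) = sw j"
    and "\<And>j b. j < num_digits n e h \<Longrightarrow> snd (count_config n e \<iota> \<beta> k) (h, j, b) = (if b = sw j then x j else y j)"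
    and "f (FOv h) = ov"
    and "(\<exists>j<num_digits n e h. \<not> z (h, j, f (FSw h j))) = has_nonzero (num_digits n e h) x"
    and "(LEAST j. j < num_digits n e h \<and> \<not> z (h, j, f (FSw h j))) = first_nonzero (num_digits n e h) x"
proof -
  show sw: "\<And>j. j < num_digits n e h \<Longrightarrow> f (FSw h j) = sw j"
    and val: "\<And>j b. j < num_digits n e h \<Longrightarrow> snd (count_config n e \<iota> \<beta> k) (h, j, b) = (if b = sw j then x j else y j)"
    and "f (FOv h) = ov"
    using h started st by (simp_all add: f_def count_config_def)
  have zero: "\<And>j. j < num_digits n e h \<Longrightarrow> z (h, j, f (FSw h j)) = (x j = 0)"
    using sw val by (simp add: z_def)
  then show "(\<exists>j<num_digits n e h. \<not> z (h, j, f (FSw h j))) = has_nonzero (num_digits n e h) x"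
    by (auto simp: has_nonzero_def)
  show "(LEAST j. j < num_digits n e h \<and> \<not> z (h, j, f (FSw h j))) = first_nonzero (num_digits n e h) x"
    unfolding first_nonzero_def using zero by (intro arg_cong[where f=Least] ext) auto
qed

lemma odo_state_Suc: "odo_state n e \<beta> h (Suc s) = odo_step (num_digits n e h) (odo_state n e \<beta> h s)"
  by (simp add: odo_state_def odo_iter_Suc)

lemma count_step_advance_flags:
  fixes n :: nat and e \<beta> k :: "nat \<Rightarrow> nat" and \<iota> :: bool and f z
  defines "f \<equiv> fst (count_config n e \<iota> \<beta> k)" and "z \<equiv> \<lambda>kk. snd (count_config n e \<iota> \<beta> k) kk = 0"
  assumes ac: "count_target n d a = Some h0"
  shows "fst (count_machine n e d f a z) = fst (count_config n e True \<beta> (k(h0 := Suc (k h0))))"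
proof
  define k' where "k' = k(h0 := Suc (k h0))"
  have an: "a \<noteq> Cent" "\<And>m. a \<noteq> B m" "h0 \<le> n" using count_target_not_B[OF ac] by auto
  have fS: "f (FSw h j) = (h \<le> n \<and> j < num_digits n e h \<and> 0 < k h \<and> fst (odo_state n e \<beta> h (k h - 1)) j)" for h j
    by (simp add: f_def count_config_def)
  have fSt: "f (FSt h) = (h \<le> n \<and> 0 < k h)" for h by (simp add: f_def count_config_def)
  have fOv: "f (FOv h) = (h \<le> n \<and> 0 < k h \<and> odo_overflow (odo_state n e \<beta> h (k h - 1)))" for h
    by (simp add: f_def count_config_def)
  obtain sw x y ov where st: "odo_state n e \<beta> h0 (k h0 - 1) = (sw, x, y, ov)"
    by (cases "odo_state n e \<beta> h0 (k h0 - 1)") auto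
  let ?L = "num_digits n e h0"
  note started = count_config_started[OF f_def[THEN meta_eq_to_obj_eq] z_def[THEN meta_eq_to_obj_eq] an(3) _ st]
  have next_state: "0 < k h0 \<Longrightarrow> odo_state n e \<beta> h0 (k' h0 - 1) = odo_step ?L (sw, x, y, ov)"
  proof -
    assume "0 < k h0"
    then have "k' h0 - 1 = Suc (k h0 - 1)" by (simp add: k'_def)
    then show ?thesis using st by (simp add: odo_state_Suc)
  qed
  have unchanged: "\<not> (count_target n d a = Some h \<and> f (FSt h))" "h = h0 \<Longrightarrow> k h0 = 0"
    if "\<not> (h = h0 \<and> 0 < k h0)" for h
    using that ac fSt by auto
  fix fk show "fst (count_machine n e d f a z) fk = fst (count_config n e True \<beta> k') fk"
  proof (cases fk)
    case FInit then show ?thesis by (simp add: count_machine_fst count_config_def)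
  next
    case (FLd m) then show ?thesis using an by (simp add: count_machine_fst count_config_def f_def)
  next
    case (FSt h) then show ?thesis using ac an by (auto simp: count_machine_fst count_config_def fSt k'_def)
  next
    case FVer then show ?thesis using an by (simp add: count_machine_fst count_config_def f_def)
  next
    case (FSw h j)
    show ?thesis
    proof (cases "h = h0 \<and> 0 < k h0")
      case False
      then show ?thesis using FSw unchanged[OF False]
        by (auto simp: count_machine_fst count_config_def fS k'_def odo_state_def odo_iter_def odo_init_def)
    next
      case True
      then have s: "count_target n d a = Some h \<and> f (FSt h)" using ac fSt an by auto
      have "has_nonzero ?L x \<Longrightarrow> first_nonzero ?L x < ?L" using first_nonzero_props(1) by blast
      then show ?thesis using FSw True s started(4,5) next_state an(3) st fS
        by (auto simp: count_machine_fst count_config_def k'_def odo_step_def Let_def)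
    qed
  next
    case (FOv h)
    show ?thesis
    proof (cases "h = h0 \<and> 0 < k h0")
      case False
      then show ?thesis using FOv unchanged[OF False]
        by (auto simp: count_machine_fst count_config_def fOv k'_def odo_state_def odo_iter_def odo_init_def)
    next
      case True
      then have s: "count_target n d a = Some h \<and> f (FSt h)" using ac fSt an by auto
      show ?thesis using FOv True s started(4) next_state an(3) st fOv
        by (auto simp: count_machine_fst count_config_def k'_def odo_step_def Let_def)
    qed
  qed
qed

text \<open>Counter part of reading a letter of block \<open>h0\<close>: the two counters of each
  digit of odometer \<open>h0\<close> follow one odometer step (by a unit change on the
  selected counter), a freshly started odometer keeps its initial digits, and the
  digits of radix two are loaded on the first letter after the \<open>b\<close>-blocks when
  these are empty.\<close>
lemma count_step_advance_digits:
  fixes n :: nat and e \<beta> k :: "nat \<Rightarrow> nat" and \<iota> :: bool and f v z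
  defines "f \<equiv> fst (count_config n e \<iota> \<beta> k)" and "v \<equiv> snd (count_config n e \<iota> \<beta> k)"
    and "z \<equiv> \<lambda>kk. v kk = 0"
  assumes ac: "count_target n d a = Some h0" and cond: "\<forall>h. 0 < k h \<longrightarrow> \<iota>"
  shows "(\<lambda>kk. if kk \<in> digit_keys n e then nat (int (v kk) + clamp (snd (count_machine n e d f a z) kk)) else 0)
    = snd (count_config n e True \<beta> (k(h0 := Suc (k h0))))"
proof
  define k' where "k' = k(h0 := Suc (k h0))"
  have an: "a \<noteq> Cent" "\<And>m. a \<noteq> B m" "h0 \<le> n" using count_target_not_B[OF ac] by auto
  have fS: "f (FSw h j) = (h \<le> n \<and> j < num_digits n e h \<and> 0 < k h \<and> fst (odo_state n e \<beta> h (k h - 1)) j)" for h j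
    by (simp add: f_def count_config_def)
  have fSt: "f (FSt h) = (h \<le> n \<and> 0 < k h)" for h by (simp add: f_def count_config_def)
  have fI: "f FInit = \<iota>" by (simp add: f_def count_config_def)
  obtain sw x y ov where st: "odo_state n e \<beta> h0 (k h0 - 1) = (sw, x, y, ov)"
    by (cases "odo_state n e \<beta> h0 (k h0 - 1)") auto
  let ?L = "num_digits n e h0"
  have "z = (\<lambda>kk. snd (count_config n e \<iota> \<beta> k) kk = 0)" by (simp add: z_def v_def)
  note started = count_config_started[OF f_def[THEN meta_eq_to_obj_eq] this an(3) _ st]
  have next_state: "0 < k h0 \<Longrightarrow> odo_state n e \<beta> h0 (k' h0 - 1) = odo_step ?L (sw, x, y, ov)"
  proof -
    assume "0 < k h0"
    then have "k' h0 - 1 = Suc (k h0 - 1)" by (simp add: k'_def)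
    then show ?thesis using st by (simp add: odo_state_Suc)
  qed
  fix kk :: digit_key
  obtain h j b where kk: "kk = (h, j, b)" by (cases kk) auto
  show "(if kk \<in> digit_keys n e then nat (int (v kk) + clamp (snd (count_machine n e d f a z) kk)) else 0)
      = snd (count_config n e True \<beta> k') kk"
  proof (cases "h \<le> n \<and> j < num_digits n e h")
    case False
    then have "kk \<notin> digit_keys n e" "snd (count_config n e True \<beta> k') kk = 0"
      by (auto simp: kk digit_keys_def count_config_def)
    then show ?thesis by simp
  next
    case True
    then have inK: "kk \<in> digit_keys n e" by (simp add: kk digit_keys_def)
    show ?thesis
    proof (cases "h = h0 \<and> 0 < k h0")
      case hc: True
      then have io: "\<iota>" using cond by auto
      have s: "count_target n d a = Some h \<and> f (FSt h)" using ac fSt an hc by auto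
      have jL: "j < ?L" using True hc by simp
      have fsj: "f (FSw h0 j) = sw j" using started(1) hc jL by simp
      have op: "snd (count_machine n e d f a z) kk
          = (if has_nonzero ?L x \<and> j = first_nonzero ?L x then (if b = sw j then -1 else 1) else 0)"
        unfolding kk count_machine_snd using hc s io fI an started(4,5) fsj by auto
      have vv: "v kk = (if b = sw j then x j else y j)" using started(2)[OF _ jL] hc kk by (simp add: v_def)
      have ex: "snd (count_config n e True \<beta> k') kk = (if b = fst (odo_step ?L (sw, x, y, ov)) j
          then odo_digits (odo_step ?L (sw, x, y, ov)) j else fst (snd (snd (odo_step ?L (sw, x, y, ov)))) j)"
        using next_state hc True by (simp add: kk count_config_def k'_def)
      have "has_nonzero ?L x \<Longrightarrow> x (first_nonzero ?L x) \<noteq> 0" using first_nonzero_props(2) by blast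
      then show ?thesis unfolding ex using inK op vv by (auto simp: odo_step_def clamp_def)
    next
      case hc: False
      have "\<not> (count_target n d a = Some h \<and> f (FSt h))" using hc ac fSt by auto
      then have op: "snd (count_machine n e d f a z) kk = (if \<not> \<iota> \<and> digit_source n e h j = 0 \<and> b = f (FSw h j) then 1 else 0)"
        unfolding kk count_machine_snd using fI an by auto
      show ?thesis
      proof (cases "k h = 0")
        case k0: True
        have fsj: "f (FSw h j) = False" using fS k0 by simp
        have vv: "v kk = (if b then 0 else initial_digit n e \<iota> \<beta> h j)" using True k0 by (simp add: kk v_def count_config_def)
        show ?thesis
        proof (cases "h = h0")
          case False
          then have "snd (count_config n e True \<beta> k') kk = (if b then 0 else initial_digit n e True \<beta> h j)"
            using True k0 by (simp add: kk count_config_def k'_def)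
          then show ?thesis using inK op vv fsj by (auto simp: initial_digit_def clamp_def)
        next
          case True
          have "snd (count_config n e True \<beta> k') kk = (if b then 0 else radix_of \<beta> (digit_source n e h j) - 1)"
            using \<open>h \<le> n \<and> j < num_digits n e h\<close> k0 True
            by (simp add: kk count_config_def k'_def odo_state_def odo_iter_def odo_init_def odo_radices_def)
          then show ?thesis using inK op vv fsj by (auto simp: initial_digit_def clamp_def radix_of_def)
        qed
      next
        case kp: False
        then have io: "\<iota>" and hne: "h \<noteq> h0" using cond hc by auto
        have "snd (count_config n e True \<beta> k') kk = v kk" using hne kp by (simp add: kk count_config_def k'_def v_def)
        then show ?thesis using inK op io by (simp add: clamp_def)
      qed
    qed
  qed
qed

lemma count_step_advance:
  assumes ac: "count_target n d a = Some h0" and cond: "\<forall>h. 0 < k h \<longrightarrow> \<iota>"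
  shows "cm_step (digit_keys n e) (count_machine n e d) (count_config n e \<iota> \<beta> k) a
    = count_config n e True \<beta> (k(h0 := Suc (k h0)))"
  using count_step_advance_flags[OF ac, of e \<iota> \<beta> k] count_step_advance_digits[OF ac cond, of e \<beta>]
  by (simp add: cm_step_pair[of _ _ "fst (count_config n e \<iota> \<beta> k)" "snd (count_config n e \<iota> \<beta> k)", simplified])

text \<open>The verdict on odometer \<open>h\<close> taken at the end marker: if some of its radices
  is zero (a needed \<open>b\<close>-block was empty) the block must be empty; otherwise the
  odometer must have been started, not have overflowed, and show all digits zero.\<close>
lemma odometer_verdict:
  fixes n :: nat and e \<beta> k :: "nat \<Rightarrow> nat" and \<iota> :: bool and f z
  defines "f \<equiv> fst (count_config n e \<iota> \<beta> k)" and "z \<equiv> \<lambda>kk. snd (count_config n e \<iota> \<beta> k) kk = 0"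
  assumes h: "h \<le> n"
  shows "(if (\<exists>j<num_digits n e h. digit_source n e h j \<noteq> 0 \<and> \<not> f (FLd (digit_source n e h j)))
            then \<not> f (FSt h) else f (FSt h) \<and> \<not> f (FOv h) \<and> (\<forall>j<num_digits n e h. z (h, j, f (FSw h j))))
        \<longleftrightarrow> k h = radix_prod (odo_radices n e \<beta> h) (num_digits n e h)"
proof -
  let ?L = "num_digits n e h" and ?r = "odo_radices n e \<beta> h"
  have fSt: "f (FSt h) = (0 < k h)" using h by (simp add: f_def count_config_def)
  have fL: "f (FLd m) = (1 \<le> m \<and> m \<le> n \<and> 0 < \<beta> m)" for m by (simp add: f_def count_config_def)
  have "(digit_source n e h j \<noteq> 0 \<and> \<not> f (FLd (digit_source n e h j))) \<longleftrightarrow> ?r j = 0" if "j < ?L" for j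
    using digit_source_range[OF h that] by (auto simp: fL odo_radices_def radix_of_def)
  then have zero_radix: "(\<exists>j<?L. digit_source n e h j \<noteq> 0 \<and> \<not> f (FLd (digit_source n e h j))) \<longleftrightarrow> (\<exists>j<?L. ?r j = 0)"
    by blast
  have "radix_prod ?r ?L = 0 \<longleftrightarrow> (\<exists>j<?L. ?r j = 0)" by (auto simp: radix_prod_def)
  show ?thesis
  proof (cases "\<exists>j<?L. ?r j = 0")
    case True then show ?thesis using zero_radix \<open>radix_prod ?r ?L = 0 \<longleftrightarrow> _\<close> fSt by auto
  next
    case False
    then have rpos: "\<forall>j<?L. 1 \<le> ?r j" by (auto simp: Suc_le_eq)
    have pp: "1 \<le> radix_prod ?r ?L" using radix_prod_pos[OF rpos] .
    show ?thesis
    proof (cases "k h = 0")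
      case True then show ?thesis using zero_radix False fSt pp by auto
    next
      case kp: False
      obtain sw x y ov where st: "odo_state n e \<beta> h (k h - 1) = (sw, x, y, ov)"
        by (cases "odo_state n e \<beta> h (k h - 1)") auto
      note started = count_config_started[OF f_def[THEN meta_eq_to_obj_eq] z_def[THEN meta_eq_to_obj_eq] h _ st]
      have "(\<forall>j<?L. z (h, j, f (FSw h j))) \<longleftrightarrow> \<not> has_nonzero ?L x" using started(4) kp by auto
      moreover have "(\<not> ov \<and> \<not> has_nonzero ?L x) \<longleftrightarrow> k h - 1 = radix_prod ?r ?L - 1"
        using odo_iter_final_iff[OF rpos, of "k h - 1"] st by (simp add: odo_state_def)
      ultimately show ?thesis using zero_radix False fSt kp pp started(3) by auto
    qed
  qed
qed

lemma count_step_verify: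
  shows "fst (cm_step (digit_keys n e) (count_machine n e d) (count_config n e \<iota> \<beta> k) Cent) FVer \<longleftrightarrow>
     (\<forall>h\<le>n. k h = radix_prod (odo_radices n e \<beta> h) (num_digits n e h))"
  using odometer_verdict[where n=n and e=e and \<beta>=\<beta> and k=k and \<iota>=\<iota>]
  by (simp add: cm_step_pair[of _ _ "fst (count_config n e \<iota> \<beta> k)" "snd (count_config n e \<iota> \<beta> k)", simplified]
      count_machine_fst)

lemma count_run_B: "\<forall>a\<in>set u. \<exists>m. a = B m \<and> 1 \<le> m \<and> m \<le> n \<Longrightarrow>
  foldl (cm_step (digit_keys n e) (count_machine n e d)) (count_config n e \<iota> \<beta> (\<lambda>_. 0)) u = count_config n e (\<iota> \<or> u \<noteq> []) (\<lambda>m. \<beta> m + count_list u (B m)) (\<lambda>_. 0)"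
proof (induction u arbitrary: \<iota> \<beta>)
  case Nil then show ?case by simp
next
  case (Cons a u)
  then obtain m where a: "a = B m" "1 \<le> m" "m \<le> n" by auto
  have "foldl (cm_step (digit_keys n e) (count_machine n e d)) (count_config n e \<iota> \<beta> (\<lambda>_. 0)) (a # u) =
      foldl (cm_step (digit_keys n e) (count_machine n e d)) (count_config n e True (\<beta>(m := \<beta> m + 1)) (\<lambda>_. 0)) u"
    using count_step_B[OF a(2,3)] a(1) by simp
  also have "\<dots> = count_config n e True (\<lambda>m'. (\<beta>(m := \<beta> m + 1)) m' + count_list u (B m')) (\<lambda>_. 0)"
    using Cons by simp
  also have "(\<lambda>m'. (\<beta>(m := \<beta> m + 1)) m' + count_list u (B m')) = (\<lambda>m'. \<beta> m' + count_list (a # u) (B m'))"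
    using a by auto
  finally show ?case by simp
qed

lemma count_run_advance: "\<forall>a\<in>set u. count_target n d a \<noteq> None \<Longrightarrow> \<forall>h. 0 < k h \<longrightarrow> \<iota> \<Longrightarrow>
  foldl (cm_step (digit_keys n e) (count_machine n e d)) (count_config n e \<iota> \<beta> k) u = count_config n e (\<iota> \<or> u \<noteq> []) \<beta> (\<lambda>h. k h + length (filter (\<lambda>a. count_target n d a = Some h) u))"
proof (induction u arbitrary: \<iota> k)
  case Nil then show ?case by simp
next
  case (Cons a u)
  then obtain h0 where a: "count_target n d a = Some h0" by auto
  have "foldl (cm_step (digit_keys n e) (count_machine n e d)) (count_config n e \<iota> \<beta> k) (a # u) =
      foldl (cm_step (digit_keys n e) (count_machine n e d)) (count_config n e True \<beta> (k(h0 := Suc (k h0)))) u"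
    using count_step_advance[OF a Cons.prems(2)] by simp
  also have "\<dots> = count_config n e True \<beta> (\<lambda>h. (k(h0 := Suc (k h0))) h + length (filter (\<lambda>a. count_target n d a = Some h) u))"
    using Cons by simp
  also have "(\<lambda>h. (k(h0 := Suc (k h0))) h + length (filter (\<lambda>a. count_target n d a = Some h) u)) =
        (\<lambda>h. k h + length (filter (\<lambda>a. count_target n d a = Some h) (a # u)))"
    using a by auto
  finally show ?case by simp
qed

lemma count_list_replicate: "count_list (replicate k a) b = (if a = b then k else 0)"
  by (induction k) auto

lemma count_blocks_B: "count_list (blocks n B \<alpha>) (B m) = (if 1 \<le> m \<and> m \<le> n then \<alpha> m else 0)"
  by (induction n) (auto simp: blocks_def count_list_replicate)

lemma set_blocks: "a \<in> set (blocks n x f) \<Longrightarrow> \<exists>m. a = x m \<and> 1 \<le> m \<and> m \<le> n"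
  by (auto simp: blocks_def)

lemma count_target_C: "1 \<le> m \<Longrightarrow> m \<le> n \<Longrightarrow> count_target n d (C m) = Some m" by (simp add: count_target_def)
lemma count_target_d: "d \<in> {D1, D2} \<Longrightarrow> count_target n d d = Some 0" by (auto simp: count_target_def)

lemma filter_blocks_C: "length (filter (\<lambda>a. count_target n' d a = Some h) (blocks n C \<gamma>)) = (if 1 \<le> h \<and> h \<le> n then \<gamma> h else 0)"
  if "n \<le> n'"
  using that by (induction n) (auto simp: blocks_def count_target_def filter_replicate)

lemma radix_prod_list: "radix_prod (\<lambda>j. f (xs ! j)) (length xs) = prod_list (map f xs)"
  unfolding radix_prod_def by (simp add: prod.list_conv_set_nth)

lemma prod_list_upt: "prod_list (map f [1..<Suc n]) = (\<Prod>m\<in>{1..n}. f m)"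
  by (induction n) (auto simp: atLeastAtMostSuc_conv mult.commute)

lemma radix_prod_odo_radices: "radix_prod (odo_radices n e \<beta> h) (num_digits n e h) = (if h = 0 then 2 ^ n * (\<Prod>m\<in>{1..n}. \<beta> m ^ e m) else \<beta> h ^ e h)"
proof -
  have "radix_prod (odo_radices n e \<beta> h) (num_digits n e h) = prod_list (map (radix_of \<beta>) (digit_sources n e h))"
    unfolding odo_radices_def by (rule radix_prod_list)
  also have "\<dots> = (if h = 0 then 2 ^ n * (\<Prod>m\<in>{1..n}. \<beta> m ^ e m) else \<beta> h ^ e h)"
  proof (cases "h = 0")
    case True
    have g: "0 \<notin> set xs \<Longrightarrow> prod_list (map (radix_of \<beta>) (concat (map (\<lambda>m. replicate (e m) m) xs))) = prod_list (map (\<lambda>m. \<beta> m ^ e m) xs)" for xs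
      by (induction xs) (auto simp: radix_of_def)
    have A: "prod_list (map (radix_of \<beta>) (concat (map (\<lambda>m. replicate (e m) m) [1..<Suc n]))) = (\<Prod>m\<in>{1..n}. \<beta> m ^ e m)"
      unfolding prod_list_upt[symmetric] by (rule g) simp
    have Bq: "prod_list (map (radix_of \<beta>) (replicate n 0)) = 2 ^ n" by (simp add: radix_of_def)
    have sr: "digit_sources n e h = concat (map (\<lambda>m. replicate (e m) m) [1..<Suc n]) @ replicate n 0" using True by (simp add: digit_sources_def)
    show ?thesis unfolding sr map_append prod_list.append A Bq using True by simp
  next
    case False then show ?thesis by (simp add: digit_sources_def radix_of_def prod_list_replicate)
  qed
  finally show ?thesis .
qed

lemma count_config_init: "count_config n e False (\<lambda>_. 0) (\<lambda>_. 0) = (fst (count_config n e False (\<lambda>_. 0) (\<lambda>_. 0)), \<lambda>_. 0)"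
  by (auto simp: count_config_def initial_digit_def)

lemma block_lengths_match:
  assumes k: "\<And>h. k h = (if 1 \<le> h \<and> h \<le> n then \<gamma> h else if h = 0 then \<delta> else 0)"
    and \<beta>: "\<And>m. 1 \<le> m \<Longrightarrow> m \<le> n \<Longrightarrow> \<beta> m = \<alpha> m"
  shows "(\<forall>h\<le>n. k h = radix_prod (odo_radices n e \<beta> h) (num_digits n e h)) \<longleftrightarrow>
    (\<forall>m. 1 \<le> m \<and> m \<le> n \<longrightarrow> \<gamma> m = \<alpha> m ^ e m) \<and> \<delta> = 2 ^ n * (\<Prod>m\<in>{1..n}. \<alpha> m ^ e m)"
proof -
  have "(\<Prod>m\<in>{1..n}. \<beta> m ^ e m) = (\<Prod>m\<in>{1..n}. \<alpha> m ^ e m)"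
    by (intro prod.cong) (auto simp: \<beta>)
  then have "radix_prod (odo_radices n e \<beta> h) (num_digits n e h)
      = (if h = 0 then 2 ^ n * (\<Prod>m\<in>{1..n}. \<alpha> m ^ e m) else \<alpha> h ^ e h)" if "h \<le> n" for h
    using that by (simp add: radix_prod_odo_radices \<beta>)
  then have "(\<forall>h\<le>n. k h = radix_prod (odo_radices n e \<beta> h) (num_digits n e h)) \<longleftrightarrow>
      (\<forall>h\<le>n. k h = (if h = 0 then 2 ^ n * (\<Prod>m\<in>{1..n}. \<alpha> m ^ e m) else \<alpha> h ^ e h))"
    by auto
  also have "\<dots> \<longleftrightarrow> (\<forall>m. 1 \<le> m \<and> m \<le> n \<longrightarrow> \<gamma> m = \<alpha> m ^ e m) \<and> \<delta> = 2 ^ n * (\<Prod>m\<in>{1..n}. \<alpha> m ^ e m)"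
    unfolding k by (auto simp: Suc_le_eq)
  finally show ?thesis .
qed

lemma count_check_iff:
  assumes d: "d \<in> {D1, D2}"
  shows "fst (foldl (cm_step (digit_keys n e) (count_machine n e d)) (count_config n e False (\<lambda>_. 0) (\<lambda>_. 0)) (shape_word n d \<alpha> \<gamma> \<delta>)) FVer \<longleftrightarrow>
    (\<forall>m. 1 \<le> m \<and> m \<le> n \<longrightarrow> \<gamma> m = \<alpha> m ^ e m) \<and> \<delta> = 2 ^ n * (\<Prod>m\<in>{1..n}. \<alpha> m ^ e m)"
proof -
  let ?F = "foldl (cm_step (digit_keys n e) (count_machine n e d))"
  define CD where "CD = blocks n C \<gamma> @ replicate \<delta> d"
  define \<beta> where "\<beta> = (\<lambda>m. if 1 \<le> m \<and> m \<le> n then \<alpha> m else 0)"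
  define k where "k = (\<lambda>h. length (filter (\<lambda>a. count_target n d a = Some h) CD))"
  have W: "shape_word n d \<alpha> \<gamma> \<delta> = blocks n B \<alpha> @ CD @ [Cent]" by (simp add: shape_word_def CD_def)
  have read_B: "?F (count_config n e False (\<lambda>_. 0) (\<lambda>_. 0)) (blocks n B \<alpha>) = count_config n e (blocks n B \<alpha> \<noteq> []) \<beta> (\<lambda>_. 0)"
    using count_run_B[where u="blocks n B \<alpha>" and n=n and \<iota>=False and \<beta>="\<lambda>_. 0" and e=e and d=d] set_blocks
    by (auto simp: count_blocks_B \<beta>_def)
  have "\<forall>a\<in>set CD. count_target n d a \<noteq> None"
    using d by (auto simp: CD_def count_target_d dest!: set_blocks simp: count_target_C)
  then have read_CD: "?F (count_config n e (blocks n B \<alpha> \<noteq> []) \<beta> (\<lambda>_. 0)) CD = count_config n e (blocks n B \<alpha> \<noteq> [] \<or> CD \<noteq> []) \<beta> k"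
    using count_run_advance[where k="\<lambda>_. 0" and \<iota>="blocks n B \<alpha> \<noteq> []" and e=e and \<beta>=\<beta>] by (simp add: k_def)
  have "fst (?F (count_config n e False (\<lambda>_. 0) (\<lambda>_. 0)) (shape_word n d \<alpha> \<gamma> \<delta>)) FVer \<longleftrightarrow> (\<forall>h\<le>n. k h = radix_prod (odo_radices n e \<beta> h) (num_digits n e h))"
    unfolding W foldl_append read_B read_CD using count_step_verify by simp
  also have "\<dots> \<longleftrightarrow> (\<forall>m. 1 \<le> m \<and> m \<le> n \<longrightarrow> \<gamma> m = \<alpha> m ^ e m) \<and> \<delta> = 2 ^ n * (\<Prod>m\<in>{1..n}. \<alpha> m ^ e m)"
  proof (rule block_lengths_match)
    show "k h = (if 1 \<le> h \<and> h \<le> n then \<gamma> h else if h = 0 then \<delta> else 0)" for h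
      using d filter_blocks_C[of n n d h \<gamma>] by (auto simp: k_def CD_def filter_replicate count_target_def)
  qed (simp add: \<beta>_def)
  finally show ?thesis .
qed

section \<open>Monomial languages\<close>

text \<open>The alphabet \<open>sym\<close> is infinite, while a counter machine must read a finite
  alphabet.  Letters \<open>b_m\<close>, \<open>c_m\<close> with \<open>m\<close> outside \<open>1..n\<close> never occur in
  the languages at hand, so they are collapsed to a single representative each.\<close>
definition normalize_sym :: "nat \<Rightarrow> sym \<Rightarrow> sym" where
  "normalize_sym n a = (case a of B m \<Rightarrow> if 1 \<le> m \<and> m \<le> n then B m else B 0
     | C m \<Rightarrow> if 1 \<le> m \<and> m \<le> n then C m else C 0 | x \<Rightarrow> x)"

definition proper_sym :: "nat \<Rightarrow> sym \<Rightarrow> bool" where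
  "proper_sym n a = (case a of B m \<Rightarrow> 1 \<le> m \<and> m \<le> n | C m \<Rightarrow> 1 \<le> m \<and> m \<le> n | _ \<Rightarrow> True)"

lemma normalize_proper: "proper_sym n a \<Longrightarrow> normalize_sym n a = a" by (cases a) (auto simp: proper_sym_def normalize_sym_def)
lemma proper_normalize: "proper_sym n (normalize_sym n a) \<Longrightarrow> normalize_sym n a = a" by (cases a) (auto simp: proper_sym_def normalize_sym_def split: if_splits)

lemma normalize_finite_range: "finite (range (normalize_sym n))"
proof -
  have "range (normalize_sym n) \<subseteq> B ` {0..n} \<union> C ` {0..n} \<union> {D1, D2, Cent}"
    by (auto simp: normalize_sym_def split: sym.splits)
  then show ?thesis by (rule finite_subset) auto
qed

lemma normalize_lang: assumes "\<forall>w\<in>L. \<forall>x\<in>set w. proper_sym n x"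
  shows "map (normalize_sym n) w \<in> L \<longleftrightarrow> w \<in> L"
proof
  assume H: "map (normalize_sym n) w \<in> L"
  have "\<forall>x\<in>set w. proper_sym n (normalize_sym n x)" using assms H by auto
  then have "map (normalize_sym n) w = w" by (intro map_idI) (auto dest: proper_normalize)
  then show "w \<in> L" using H by simp
next
  assume "w \<in> L"
  then have "map (normalize_sym n) w = w" using assms by (intro map_idI) (auto simp: normalize_proper)
  then show "map (normalize_sym n) w \<in> L" using \<open>w \<in> L\<close> by simp
qed

definition shape_count_machine ::
    "nat \<Rightarrow> (nat \<Rightarrow> nat) \<Rightarrow> sym \<Rightarrow> nat option \<times> (flag \<Rightarrow> bool) \<Rightarrow> sym \<Rightarrow> (digit_key \<Rightarrow> bool)
      \<Rightarrow> (nat option \<times> (flag \<Rightarrow> bool)) \<times> (digit_key \<Rightarrow> int)" where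
  "shape_count_machine n e d q a z = ((shape_step n d (fst q) a, fst (count_machine n e d (snd q) a z)), snd (count_machine n e d (snd q) a z))"

lemma shape_count_step: "cm_step K (shape_count_machine n e d) ((rs, f), v) a =
   ((shape_step n d rs a, fst (cm_step K (count_machine n e d) (f, v) a)), snd (cm_step K (count_machine n e d) (f, v) a))"
  unfolding cm_step_def shape_count_machine_def Let_def fst_conv snd_conv by simp

lemma shape_count_run: "foldl (cm_step K (shape_count_machine n e d)) ((rs, f), v) u =
   ((foldl (shape_step n d) rs u, fst (foldl (cm_step K (count_machine n e d)) (f, v) u)),
    snd (foldl (cm_step K (count_machine n e d)) (f, v) u))"
  by (induction u arbitrary: rs f v) (simp_all add: shape_count_step)

lemma mono_lang_shape_word: "mono_lang n e d = {shape_word n d \<alpha> \<gamma> \<delta> | \<alpha> \<gamma> \<delta>. (\<forall>m. 1 \<le> m \<and> m \<le> n \<longrightarrow> \<gamma> m = \<alpha> m ^ e m) \<and> \<delta> = 2 ^ n * (\<Prod>m\<in>{1..n}. \<alpha> m ^ e m)}"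
proof -
  have tw: "term_word n e d \<alpha> = shape_word n d \<alpha> (\<lambda>m. \<alpha> m ^ e m) (2 ^ n * (\<Prod>m\<in>{1..n}. \<alpha> m ^ e m))" for \<alpha>
    by (simp add: term_word_def shape_word_def)
  have "shape_word n d \<alpha> \<gamma> \<delta> = shape_word n d \<alpha> (\<lambda>m. \<alpha> m ^ e m) \<delta>" if "\<forall>m. 1 \<le> m \<and> m \<le> n \<longrightarrow> \<gamma> m = \<alpha> m ^ e m" for \<alpha> \<gamma> \<delta>
  proof -
    have "blocks n C \<gamma> = blocks n C (\<lambda>m. \<alpha> m ^ e m)" by (rule blocks_cong) (use that in auto)
    then show ?thesis unfolding shape_word_def by simp
  qed
  note eqW = this
  show ?thesis
  proof (intro equalityI subsetI)
    fix w assume "w \<in> mono_lang n e d"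
    then obtain \<alpha> where "w = term_word n e d \<alpha>" by (auto simp: mono_lang_def)
    then show "w \<in> {shape_word n d \<alpha> \<gamma> \<delta> | \<alpha> \<gamma> \<delta>. (\<forall>m. 1 \<le> m \<and> m \<le> n \<longrightarrow> \<gamma> m = \<alpha> m ^ e m) \<and> \<delta> = 2 ^ n * (\<Prod>m\<in>{1..n}. \<alpha> m ^ e m)}"
      unfolding tw by auto
  next
    fix w assume "w \<in> {shape_word n d \<alpha> \<gamma> \<delta> | \<alpha> \<gamma> \<delta>. (\<forall>m. 1 \<le> m \<and> m \<le> n \<longrightarrow> \<gamma> m = \<alpha> m ^ e m) \<and> \<delta> = 2 ^ n * (\<Prod>m\<in>{1..n}. \<alpha> m ^ e m)}"
    then obtain \<alpha> \<gamma> \<delta> where w: "w = shape_word n d \<alpha> \<gamma> \<delta>" and c: "\<forall>m. 1 \<le> m \<and> m \<le> n \<longrightarrow> \<gamma> m = \<alpha> m ^ e m"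
      "\<delta> = 2 ^ n * (\<Prod>m\<in>{1..n}. \<alpha> m ^ e m)" by blast
    have "w = term_word n e d \<alpha>" unfolding w eqW[OF c(1)] tw c(2) ..
    then show "w \<in> mono_lang n e d" by (auto simp: mono_lang_def)
  qed
qed

lemma shape_word_proper: "d \<in> {D1, D2} \<Longrightarrow> x \<in> set (shape_word n d \<alpha> \<gamma> \<delta>) \<Longrightarrow> proper_sym n x"
  by (auto simp: shape_word_def proper_sym_def dest!: set_blocks)

text \<open>The flags the counting machine can ever raise; the finite control thus
  ranges over flag assignments vanishing outside this finite set.\<close>
definition flag_support :: "nat \<Rightarrow> (nat \<Rightarrow> nat) \<Rightarrow> flag set" where
  "flag_support n e = {FInit, FVer} \<union> FLd ` {1..n} \<union> FSt ` {0..n} \<union> FOv ` {0..n}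
     \<union> (\<lambda>(h, j). FSw h j) ` (SIGMA h:{0..n}. {..<num_digits n e h})"

lemma finite_flag_support: "finite (flag_support n e)"
  unfolding flag_support_def by auto

lemma finite_digit_keys: "finite (digit_keys n e)"
proof -
  have "digit_keys n e = (\<lambda>((h, j), b). (h, j, b)) ` ((SIGMA h:{0..n}. {..<num_digits n e h}) \<times> UNIV)"
    by (auto simp: digit_keys_def image_iff)
  then show ?thesis by simp
qed

lemma count_machine_support:
  assumes f: "\<forall>y. y \<notin> flag_support n e \<longrightarrow> \<not> f y" and x: "x \<notin> flag_support n e"
  shows "\<not> fst (count_machine n e d f b z) x"
proof (cases x)
  case (FSw h j)
  have ng: "\<not> (h \<le> n \<and> j < num_digits n e h)" using x FSw unfolding flag_support_def by auto
  have "\<not> ((count_target n d b = Some h \<and> f (FSt h)) \<and> (\<exists>j<num_digits n e h. \<not> z (h, j, f (FSw h j)))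
       \<and> j < (LEAST j. j < num_digits n e h \<and> \<not> z (h, j, f (FSw h j))))"
  proof
    assume H: "(count_target n d b = Some h \<and> f (FSt h)) \<and> (\<exists>j<num_digits n e h. \<not> z (h, j, f (FSw h j)))
       \<and> j < (LEAST j. j < num_digits n e h \<and> \<not> z (h, j, f (FSw h j)))"
    then obtain j' where j': "j' < num_digits n e h" "\<not> z (h, j', f (FSw h j'))" by auto
    have "(LEAST j. j < num_digits n e h \<and> \<not> z (h, j, f (FSw h j))) \<le> j'" using j' by (intro Least_le) auto
    then show False using H j' ng count_target_not_B[of n d b h] by auto
  qed
  then show ?thesis using FSw f x by (simp add: count_machine_fst)
next
  case (FLd m) then show ?thesis using f x by (auto simp: count_machine_fst flag_support_def)
next
  case (FSt h) then show ?thesis using f x count_target_not_B[of n d b h] by (auto simp: count_machine_fst flag_support_def)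
next
  case (FOv h) then show ?thesis using f x count_target_not_B[of n d b h] by (auto simp: count_machine_fst flag_support_def)
qed (use x in \<open>auto simp: flag_support_def\<close>)

lemma shape_count_machine_accepts:
  assumes d: "d \<in> {D1, D2}"
  shows "(fst (cm_run (digit_keys n e) (shape_count_machine n e d)
      (Some 0, fst (count_config n e False (\<lambda>_. 0) (\<lambda>_. 0))) u) \<in>
        {q. fst q = Some (2 * n + 2) \<and> snd q FVer}) \<longleftrightarrow> u \<in> mono_lang n e d"
proof -
  have "fst (cm_run (digit_keys n e) (shape_count_machine n e d) (Some 0, fst (count_config n e False (\<lambda>_. 0) (\<lambda>_. 0))) u)
     = (foldl (shape_step n d) (Some 0) u, fst (foldl (cm_step (digit_keys n e) (count_machine n e d)) (count_config n e False (\<lambda>_. 0) (\<lambda>_. 0)) u))"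
    by (simp add: cm_run_def shape_count_run count_config_init[symmetric])
  then have "fst (cm_run (digit_keys n e) (shape_count_machine n e d) (Some 0, fst (count_config n e False (\<lambda>_. 0) (\<lambda>_. 0))) u)
      \<in> {q. fst q = Some (2 * n + 2) \<and> snd q FVer} \<longleftrightarrow>
    foldl (shape_step n d) (Some 0) u = Some (2 * n + 2) \<and>
    fst (foldl (cm_step (digit_keys n e) (count_machine n e d)) (count_config n e False (\<lambda>_. 0) (\<lambda>_. 0)) u) FVer"
    by simp
  also have "\<dots> \<longleftrightarrow> u \<in> mono_lang n e d"
    unfolding shape_check_iff[OF d] mono_lang_shape_word using count_check_iff[OF d] by blast
  finally show ?thesis .
qed

theorem mono_lang_CA:
  assumes d: "d \<in> {D1, D2}"
  shows "mono_lang n e d \<in> L_rt_CA"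
proof -
  define Cs where "Cs = insert None (Some ` {0..2 * n + 2}) \<times>
     {f :: flag \<Rightarrow> bool. \<forall>y. y \<notin> flag_support n e \<longrightarrow> \<not> f y}"
  define q0 where "q0 = (Some (0::nat), fst (count_config n e False (\<lambda>_. 0) (\<lambda>_. 0)))"
  define F where "F = {q :: nat option \<times> (flag \<Rightarrow> bool). fst q = Some (2 * n + 2) \<and> snd q FVer}"
  have "finite Cs" unfolding Cs_def
    using finite_set_of_finite_funs[OF finite_flag_support[of n e], of "UNIV :: bool set" False] by auto
  moreover have "q0 \<in> Cs" unfolding q0_def Cs_def by (auto simp: count_config_def flag_support_def split: flag.splits)
  moreover have "fst (shape_count_machine n e d q b z) \<in> Cs" if "q \<in> Cs" for q b z
  proof -
    have "shape_step n d (fst q) b \<in> insert None (Some ` {0..2 * n + 2})"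
      using that by (cases b) (auto simp: Cs_def shape_step_def shape_rank_def split: option.splits)
    then show ?thesis
      using that count_machine_support[of n e "snd q"] by (auto simp: shape_count_machine_def Cs_def)
  qed
  ultimately have rt: "{w. w \<noteq> [] \<and> fst (cm_run (digit_keys n e) (shape_count_machine n e d) q0 (map (normalize_sym n) w)) \<in> F} \<in> L_rt_CA"
    by (intro counter_machine_in_L_rt[OF finite_digit_keys _ normalize_finite_range]) auto
  have proper: "\<forall>w\<in>mono_lang n e d. \<forall>x\<in>set w. proper_sym n x"
    using shape_word_proper[OF d] by (auto simp: mono_lang_shape_word)
  have nonempty: "\<forall>w\<in>mono_lang n e d. w \<noteq> []" by (auto simp: mono_lang_shape_word shape_word_def)
  have "{w. w \<noteq> [] \<and> fst (cm_run (digit_keys n e) (shape_count_machine n e d) q0 (map (normalize_sym n) w)) \<in> F}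
      = mono_lang n e d"
    using normalize_lang[OF proper] nonempty shape_count_machine_accepts[OF d]
    unfolding q0_def F_def by auto
  with rt show ?thesis by simp
qed

section \<open>The constant language\<close>

text \<open>A negative constant term gives the singleton language \<open>d_2^(2^n) cent\<close>; a
  finite automaton counting the \<open>d_2\<close>'s up to \<open>2^n\<close> (run as a counter machine
  without counters) recognises it.\<close>
definition const_step :: "nat \<Rightarrow> nat option \<Rightarrow> sym \<Rightarrow> nat option" where
  "const_step n q a = (case q of None \<Rightarrow> None | Some c \<Rightarrow>
     if a = D2 \<and> c < 2 ^ n then Some (Suc c) else if a = Cent \<and> c = 2 ^ n then Some (2 ^ n + 1) else None)"

lemma const_step_None: "foldl (const_step n) None u = None" by (induction u) (auto simp: const_step_def)

lemma const_step_final: "foldl (const_step n) (Some (2 ^ n + 1)) u = Some (2 ^ n + 1) \<longleftrightarrow> u = []"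
  by (cases u) (auto simp: const_step_def const_step_None)

lemma const_step_char: "c \<le> 2 ^ n \<Longrightarrow> foldl (const_step n) (Some c) u = Some (2 ^ n + 1) \<longleftrightarrow> u = replicate (2 ^ n - c) D2 @ [Cent]"
proof (induction u arbitrary: c)
  case Nil then show ?case by (cases "2 ^ n - c") auto
next
  case (Cons a u)
  show ?case
  proof (cases "c < 2 ^ n")
    case True
    then obtain t where t: "2 ^ n - c = Suc t" "2 ^ n - Suc c = t" by (metis Suc_diff_Suc)
    show ?thesis
    proof (cases "a = D2")
      case True
      then have "foldl (const_step n) (Some c) (a # u) = foldl (const_step n) (Some (Suc c)) u" using \<open>c < 2 ^ n\<close> by (simp add: const_step_def)
      then show ?thesis using Cons.IH[of "Suc c"] \<open>c < 2 ^ n\<close> t True by simp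
    next
      case False
      then have "foldl (const_step n) (Some c) (a # u) = None" using \<open>c < 2 ^ n\<close> by (simp add: const_step_def const_step_None)
      then show ?thesis using t False by simp
    qed
  next
    case False
    then have c: "c = 2 ^ n" using Cons.prems by simp
    show ?thesis
    proof (cases "a = Cent")
      case True
      then have "foldl (const_step n) (Some c) (a # u) = foldl (const_step n) (Some (2 ^ n + 1)) u" using c by (simp add: const_step_def)
      then show ?thesis using const_step_final True c by simp
    next
      case False
      then have "foldl (const_step n) (Some c) (a # u) = None" using c by (simp add: const_step_def const_step_None)
      then show ?thesis using c False by simp
    qed
  qed
qed

theorem const_lang_CA: "{replicate (2 ^ n) D2 @ [Cent]} \<in> L_rt_CA"
proof -
  define ms :: "nat option \<Rightarrow> sym \<Rightarrow> (nat \<Rightarrow> bool) \<Rightarrow> nat option \<times> (nat \<Rightarrow> int)" where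
    "ms = (\<lambda>q a z. (const_step n q a, \<lambda>_. 0))"
  define Cs :: "nat option set" where "Cs = insert None (Some ` {0..2 ^ n + 1})"
  have cl: "fst (ms q b z) \<in> Cs" if "q \<in> Cs" for q b z
    using that by (auto simp: ms_def Cs_def const_step_def split: option.splits)
  have CM: "{w. w \<noteq> [] \<and> fst (cm_run ({} :: nat set) ms (Some 0) (map (normalize_sym n) w)) \<in> {Some (2 ^ n + 1)}} \<in> L_rt_CA"
  proof -
    have fCs: "finite Cs" and q0: "Some 0 \<in> Cs" by (auto simp: Cs_def)
    show ?thesis by (rule counter_machine_in_L_rt[where Cs=Cs, OF _ fCs normalize_finite_range _ q0]) (auto intro: cl)
  qed
  have fr: "fst (cm_run ({} :: nat set) ms (Some 0) u) = foldl (const_step n) (Some 0) u" for u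
    unfolding cm_run_def by (rule cm_run_control) (simp add: ms_def)
  have g: "\<forall>w\<in>{replicate (2 ^ n) D2 @ [Cent]}. \<forall>x\<in>set w. proper_sym n x" by (auto simp: proper_sym_def)
  have "{w. w \<noteq> [] \<and> fst (cm_run ({} :: nat set) ms (Some 0) (map (normalize_sym n) w)) \<in> {Some (2 ^ n + 1)}} = {replicate (2 ^ n) D2 @ [Cent]}"
    using normalize_lang[OF g] const_step_char[of 0 n] by (auto simp: fr)
  then show ?thesis using CM by simp
qed

text \<open>The theorem: every term language is a monomial language with \<open>d_1\<close> or
  \<open>d_2\<close>, or the constant language.\<close>
theorem lemma1:
  fixes n r p0 :: nat and s :: "nat \<Rightarrow> int" and ex :: "nat \<Rightarrow> nat \<Rightarrow> nat"
  assumes "normalized n r p0 s ex"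
  shows "\<forall>j\<in>{1..r}. L_term n s ex j \<in> L_rt_CA"
  unfolding L_term_def using mono_lang_CA const_lang_CA by auto

end
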